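(* Let $n\ge 2$ be an integer. Every generalized ladder having at least $4608n^5$ vertices has a vertex-minor isomorphic to a cycle of length $4n+3$.
   Context: All graphs are finite, simple and undirected. A generalized ladder is a graph $G$ together with two vertex-disjoint paths $P=p_1p_2\dots p_a$ and $Q=q_1q_2\dots q_b$ ($a,b\ge 1$) such that $V(G)=V(P)\cup V(Q)$, every edge of $G$ not in $P$ or $Q$ (a chord) joins a vertex of $P$ to a vertex of $Q$, $p_1$ is adjacent to $q_1$, $p_a$ is adjacent to $q_b$, and no two chords cross, where chords $p_iq_j$ and $p_{i'}q_{j'}$ with $i<i'$ cross iff $j>j'$. For a vertex $v$, the local complementation $G*v$ replaces the subgraph induced on the neighborhood of $v$ by its complement. $H$ is a vertex-minor of $G$ if $H$ is an induced subgraph of a graph obtained from $G$ by a sequence of local complementations. *)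

theory Defs
  imports Main
begin

definition graph :: "'a set \<Rightarrow> ('a \<Rightarrow> 'a \<Rightarrow> bool) \<Rightarrow> bool" where
  "graph V E \<longleftrightarrow> finite V \<and> (\<forall>x y. E x y \<longrightarrow> x \<in> V \<and> y \<in> V \<and> x \<noteq> y) \<and> (\<forall>x y. E x y \<longrightarrow> E y x)"

definition local_comp :: "('a \<Rightarrow> 'a \<Rightarrow> bool) \<Rightarrow> 'a \<Rightarrow> ('a \<Rightarrow> 'a \<Rightarrow> bool)" where
  "local_comp E v = (\<lambda>x y. if E v x \<and> E v y \<and> x \<noteq> y then \<not> E x y else E x y)"

inductive lc_reach :: "'a set \<Rightarrow> ('a \<Rightarrow> 'a \<Rightarrow> bool) \<Rightarrow> ('a \<Rightarrow> 'a \<Rightarrow> bool) \<Rightarrow> bool"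
  for V E where
  refl: "lc_reach V E E"
| step: "lc_reach V E E' \<Longrightarrow> v \<in> V \<Longrightarrow> lc_reach V E (local_comp E' v)"

definition induced :: "('a \<Rightarrow> 'a \<Rightarrow> bool) \<Rightarrow> 'a set \<Rightarrow> ('a \<Rightarrow> 'a \<Rightarrow> bool)" where
  "induced E U = (\<lambda>x y. x \<in> U \<and> y \<in> U \<and> E x y)"

definition graph_iso :: "'a set \<Rightarrow> ('a \<Rightarrow> 'a \<Rightarrow> bool) \<Rightarrow> 'b set \<Rightarrow> ('b \<Rightarrow> 'b \<Rightarrow> bool) \<Rightarrow> bool" where
  "graph_iso V1 E1 V2 E2 \<longleftrightarrow>
     (\<exists>f. bij_betw f V1 V2 \<and> (\<forall>x\<in>V1. \<forall>y\<in>V1. E1 x y \<longleftrightarrow> E2 (f x) (f y)))"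

definition has_vertex_minor ::
  "'a set \<Rightarrow> ('a \<Rightarrow> 'a \<Rightarrow> bool) \<Rightarrow> 'b set \<Rightarrow> ('b \<Rightarrow> 'b \<Rightarrow> bool) \<Rightarrow> bool" where
  "has_vertex_minor V E VH EH \<longleftrightarrow>
     (\<exists>E' U. lc_reach V E E' \<and> U \<subseteq> V \<and> graph_iso U (induced E' U) VH EH)"

text \<open>The cycle of length m on vertices 0,...,m-1 (intended for m \<ge> 3).\<close>
definition cycle_V :: "nat \<Rightarrow> nat set" where
  "cycle_V m = {..<m}"

definition cycle_E :: "nat \<Rightarrow> nat \<Rightarrow> nat \<Rightarrow> bool" where
  "cycle_E m i j \<longleftrightarrow> i < m \<and> j < m \<and> (j = Suc i mod m \<or> i = Suc j mod m)"

text \<open>Generalized ladder: G with vertex-disjoint paths P = p_1...p_a, Q = q_1...q_b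
  (given as lists of distinct vertices, a,b \<ge> 1) covering V, every edge not on P or Q
  joins P and Q, p_1 q_1 and p_a q_b are edges, and no two chords cross.\<close>
definition gen_ladder_wrt ::
  "'a set \<Rightarrow> ('a \<Rightarrow> 'a \<Rightarrow> bool) \<Rightarrow> 'a list \<Rightarrow> 'a list \<Rightarrow> bool" where
  "gen_ladder_wrt V E P Q \<longleftrightarrow>
     graph V E \<and> P \<noteq> [] \<and> Q \<noteq> [] \<and> distinct P \<and> distinct Q \<and>
     set P \<inter> set Q = {} \<and> V = set P \<union> set Q \<and>
     (\<forall>i. Suc i < length P \<longrightarrow> E (P ! i) (P ! Suc i)) \<and>
     (\<forall>j. Suc j < length Q \<longrightarrow> E (Q ! j) (Q ! Suc j)) \<and>
     (\<forall>i<length P. \<forall>i'<length P. E (P ! i) (P ! i') \<longrightarrow> i' = Suc i \<or> i = Suc i') \<and>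
     (\<forall>j<length Q. \<forall>j'<length Q. E (Q ! j) (Q ! j') \<longrightarrow> j' = Suc j \<or> j = Suc j') \<and>
     E (hd P) (hd Q) \<and> E (last P) (last Q) \<and>
     (\<forall>i<length P. \<forall>i'<length P. \<forall>j<length Q. \<forall>j'<length Q.
        E (P ! i) (Q ! j) \<and> E (P ! i') (Q ! j') \<and> i < i' \<longrightarrow> \<not> j > j')"

definition gen_ladder :: "'a set \<Rightarrow> ('a \<Rightarrow> 'a \<Rightarrow> bool) \<Rightarrow> bool" where
  "gen_ladder V E \<longleftrightarrow> (\<exists>P Q. gen_ladder_wrt V E P Q)"

end

theory Submission
  imports Defs
begin

text \<open>A generalized ladder is determined by its chords: as chords do not cross and
  \<open>p\<^sub>1 q\<^sub>1\<close>, \<open>p\<^sub>a q\<^sub>b\<close> are chords, the index pairs of the chords form a chain from the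
  first to the last pair in the product order, so the ladder is encoded by the word of differences
  of consecutive chords.  A letter \<open>(a, b)\<close> of this word is a face, an induced cycle of length
  \<open>a + b + 2\<close>.  Locally complementing at a vertex of one rail that carries at most one chord, or
  exactly two consecutive chords, and deleting it yields a ladder again; this gives rewriting rules
  on words, each removing one vertex.  A face of length at least \<open>m\<close> contains the cycle of
  length \<open>m\<close> as a vertex-minor, by shortening its rails and taking an induced subgraph.
  Otherwise a rewriting step can always be chosen that enlarges the first face or decreases a
  secondary potential bounded by \<open>O(m\<^sup>3)\<close>, so a ladder with more than about \<open>2 m\<^sup>4\<close>
  vertices reaches a face of length \<open>m\<close>; for \<open>m = 4 n + 3\<close> this is below \<open>4608 n\<^sup>5\<close>.\<close>

section \<open>Vertex-minors\<close>

lemma induced_local_comp: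
  assumes "v \<in> U"
  shows "induced (local_comp E v) U = local_comp (induced E U) v"
  using assms by (auto simp: induced_def local_comp_def fun_eq_iff)

lemma local_comp_iff:
  "local_comp E v x y \<longleftrightarrow> (if E v x \<and> E v y \<and> x \<noteq> y then \<not> E x y else E x y)"
  by (simp add: local_comp_def)

lemma lc_reach_trans:
  assumes "lc_reach V E2 E3" "lc_reach V E1 E2"
  shows "lc_reach V E1 E3"
  using assms by (induction rule: lc_reach.induct) (auto intro: lc_reach.step)

lemma lc_reach_lift_induced:
  assumes "lc_reach U (induced E U) F" "U \<subseteq> V"
  shows "\<exists>E'. lc_reach V E E' \<and> F = induced E' U"
  using assms
proof (induction rule: lc_reach.induct)
  case refl
  then show ?case by (auto intro: lc_reach.refl)
next
  case (step F v)
  then obtain E' where E': "lc_reach V E E'" "F = induced E' U" by blast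
  have "lc_reach V E (local_comp E' v)"
    using E'(1) step.hyps(2) step.prems by (auto intro: lc_reach.step)
  moreover have "local_comp F v = induced (local_comp E' v) U"
    using E'(2) step.hyps(2) by (simp add: induced_local_comp)
  ultimately show ?case by blast
qed

lemma lc_reach_transfer:
  assumes "lc_reach W E2 F2" "bij_betw f U W" "\<forall>x\<in>U. \<forall>y\<in>U. E1 x y \<longleftrightarrow> E2 (f x) (f y)"
  shows "\<exists>F1. lc_reach U E1 F1 \<and> (\<forall>x\<in>U. \<forall>y\<in>U. F1 x y \<longleftrightarrow> F2 (f x) (f y))"
  using assms
proof (induction rule: lc_reach.induct)
  case refl
  then show ?case by (auto intro: lc_reach.refl)
next
  case (step F2 v)
  then obtain F1 where F1: "lc_reach U E1 F1" "\<forall>x\<in>U. \<forall>y\<in>U. F1 x y \<longleftrightarrow> F2 (f x) (f y)"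
    by blast
  obtain u where u: "u \<in> U" "f u = v"
    using step.hyps(2) step.prems(1) by (metis bij_betw_def imageE)
  have inj: "inj_on f U" using step.prems(1) by (simp add: bij_betw_def)
  have "lc_reach U E1 (local_comp F1 u)" using F1(1) u(1) by (rule lc_reach.step)
  moreover have "local_comp F1 u x y \<longleftrightarrow> local_comp F2 v (f x) (f y)" if "x \<in> U" "y \<in> U" for x y
  proof -
    have "x \<noteq> y \<longleftrightarrow> f x \<noteq> f y" using inj that by (metis inj_on_contraD)
    then show ?thesis using F1(2) that u by (simp add: local_comp_def)
  qed
  ultimately show ?case by blast
qed

lemma graph_iso_refl: "graph_iso V E V E"
  unfolding graph_iso_def by (auto intro!: exI[of _ id])

lemma graph_iso_sym:
  assumes "graph_iso V1 E1 V2 E2"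
  shows "graph_iso V2 E2 V1 E1"
proof -
  obtain f where f: "bij_betw f V1 V2" "\<forall>x\<in>V1. \<forall>y\<in>V1. E1 x y \<longleftrightarrow> E2 (f x) (f y)"
    using assms by (auto simp: graph_iso_def)
  let ?g = "inv_into V1 f"
  have g: "bij_betw ?g V2 V1" using f(1) by (rule bij_betw_inv_into)
  have "E2 x y \<longleftrightarrow> E1 (?g x) (?g y)" if "x \<in> V2" "y \<in> V2" for x y
  proof -
    have "?g x \<in> V1" "?g y \<in> V1" "f (?g x) = x" "f (?g y) = y"
      using that f(1) g by (auto simp: bij_betw_def f_inv_into_f)
    then show ?thesis using f(2) by metis
  qed
  then show ?thesis using g unfolding graph_iso_def by blast
qed

lemma graph_iso_trans:
  assumes "graph_iso V1 E1 V2 E2" "graph_iso V2 E2 V3 E3"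
  shows "graph_iso V1 E1 V3 E3"
proof -
  obtain f where f: "bij_betw f V1 V2" "\<forall>x\<in>V1. \<forall>y\<in>V1. E1 x y \<longleftrightarrow> E2 (f x) (f y)"
    using assms(1) by (auto simp: graph_iso_def)
  obtain g where g: "bij_betw g V2 V3" "\<forall>x\<in>V2. \<forall>y\<in>V2. E2 x y \<longleftrightarrow> E3 (g x) (g y)"
    using assms(2) by (auto simp: graph_iso_def)
  have "bij_betw (g \<circ> f) V1 V3" using f(1) g(1) by (rule bij_betw_trans)
  moreover have "\<forall>x\<in>V1. \<forall>y\<in>V1. E1 x y \<longleftrightarrow> E3 ((g \<circ> f) x) ((g \<circ> f) y)"
    using f g bij_betwE[OF f(1)] by auto
  ultimately show ?thesis unfolding graph_iso_def by blast
qed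

lemma has_vertex_minor_of_iso:
  assumes "graph_iso V E V2 E2"
  shows "has_vertex_minor V E V2 E2"
proof -
  have "graph_iso V (induced E V) V2 E2"
    using assms by (auto simp: graph_iso_def induced_def)
  then show ?thesis unfolding has_vertex_minor_def by (auto intro: lc_reach.refl)
qed

text \<open>A vertex-minor of a vertex-minor: the local complementations performed inside the
  induced subgraph are transported to the big graph, where they commute with taking the
  induced subgraph.\<close>

lemma has_vertex_minor_trans:
  assumes "has_vertex_minor V E V2 E2" "has_vertex_minor V2 E2 V3 E3"
  shows "has_vertex_minor V E V3 E3"
proof -
  obtain E' U where 1: "lc_reach V E E'" "U \<subseteq> V" "graph_iso U (induced E' U) V2 E2"
    using assms(1) by (auto simp: has_vertex_minor_def)
  obtain E2' U2 where 2: "lc_reach V2 E2 E2'" "U2 \<subseteq> V2" "graph_iso U2 (induced E2' U2) V3 E3"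
    using assms(2) by (auto simp: has_vertex_minor_def)
  obtain f where f: "bij_betw f U V2" "\<forall>x\<in>U. \<forall>y\<in>U. induced E' U x y \<longleftrightarrow> E2 (f x) (f y)"
    using 1(3) by (auto simp: graph_iso_def)
  obtain F1 where F1: "lc_reach U (induced E' U) F1" "\<forall>x\<in>U. \<forall>y\<in>U. F1 x y \<longleftrightarrow> E2' (f x) (f y)"
    using lc_reach_transfer[OF 2(1) f] by blast
  obtain E'' where E'': "lc_reach V E' E''" "F1 = induced E'' U"
    using lc_reach_lift_induced[OF F1(1) 1(2)] by blast
  have reach: "lc_reach V E E''" using lc_reach_trans[OF E''(1) 1(1)] .
  define U' where "U' = U \<inter> f -` U2"
  have "bij_betw f U' U2"
    using f(1) 2(2) unfolding U'_def bij_betw_def by (auto intro: inj_on_subset)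
  moreover have "\<forall>x\<in>U'. \<forall>y\<in>U'. induced E'' U' x y \<longleftrightarrow> induced E2' U2 (f x) (f y)"
    using F1(2) E''(2) by (auto simp: U'_def induced_def)
  ultimately have "graph_iso U' (induced E'' U') U2 (induced E2' U2)"
    unfolding graph_iso_def by blast
  then have "graph_iso U' (induced E'' U') V3 E3" using 2(3) by (rule graph_iso_trans)
  moreover have "U' \<subseteq> V" using 1(2) by (auto simp: U'_def)
  ultimately show ?thesis using reach by (auto simp: has_vertex_minor_def)
qed

lemma has_vertex_minor_by_local_comp_delete:
  assumes "v \<in> V" "bij_betw f (V - {v}) V2"
    "\<And>x y. x \<in> V - {v} \<Longrightarrow> y \<in> V - {v} \<Longrightarrow> local_comp E v x y \<longleftrightarrow> E2 (f x) (f y)"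
  shows "has_vertex_minor V E V2 E2"
proof -
  have "lc_reach V E (local_comp E v)" using assms(1) by (rule lc_reach.step[OF lc_reach.refl])
  moreover have "graph_iso (V - {v}) (induced (local_comp E v) (V - {v})) V2 E2"
    unfolding graph_iso_def using assms(2, 3) by (auto simp: induced_def)
  ultimately show ?thesis unfolding has_vertex_minor_def by blast
qed

lemma has_vertex_minor_by_induced_subgraph:
  assumes "U \<subseteq> V" "bij_betw f U V2"
    "\<And>x y. x \<in> U \<Longrightarrow> y \<in> U \<Longrightarrow> E x y \<longleftrightarrow> E2 (f x) (f y)"
  shows "has_vertex_minor V E V2 E2"
proof -
  have "graph_iso U (induced E U) V2 E2"
    unfolding graph_iso_def using assms(2, 3) by (auto simp: induced_def)
  then show ?thesis unfolding has_vertex_minor_def using assms(1) by (auto intro: lc_reach.refl)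
qed

section \<open>Ladders given by their chords\<close>

text \<open>The ladder with rails \<open>p\<^sub>0 \<dots> p\<^sub>A\<close> and \<open>q\<^sub>0 \<dots> q\<^sub>B\<close>: the vertex \<open>(False, i)\<close> is \<open>p\<^sub>i\<close>,
  \<open>(True, j)\<close> is \<open>q\<^sub>j\<close>, and \<open>(i, j) \<in> C\<close> means that \<open>p\<^sub>i q\<^sub>j\<close> is a chord.\<close>

type_synonym lvertex = "bool \<times> nat"

definition ladder_V :: "nat \<Rightarrow> nat \<Rightarrow> lvertex set" where
  "ladder_V A B = {v. if fst v then snd v \<le> B else snd v \<le> A}"

definition ladder_E :: "nat \<Rightarrow> nat \<Rightarrow> (nat \<times> nat) set \<Rightarrow> lvertex \<Rightarrow> lvertex \<Rightarrow> bool" where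
  "ladder_E A B C u v =
     (if fst u = fst v then (if fst u then snd u \<le> B \<and> snd v \<le> B else snd u \<le> A \<and> snd v \<le> A)
                            \<and> (snd v = Suc (snd u) \<or> snd u = Suc (snd v))
      else if fst u then (snd v, snd u) \<in> C \<and> snd v \<le> A \<and> snd u \<le> B
      else (snd u, snd v) \<in> C \<and> snd u \<le> A \<and> snd v \<le> B)"

lemma ladder_V_simps [simp]:
  "(False, x) \<in> ladder_V A B \<longleftrightarrow> x \<le> A" "(True, y) \<in> ladder_V A B \<longleftrightarrow> y \<le> B"
  by (auto simp: ladder_V_def)

lemma ladder_E_simps [simp]:
  "ladder_E A B C (False, x) (False, y) \<longleftrightarrow> x \<le> A \<and> y \<le> A \<and> (y = Suc x \<or> x = Suc y)"
  "ladder_E A B C (True, x) (True, y) \<longleftrightarrow> x \<le> B \<and> y \<le> B \<and> (y = Suc x \<or> x = Suc y)"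
  "ladder_E A B C (False, x) (True, y) \<longleftrightarrow> (x, y) \<in> C \<and> x \<le> A \<and> y \<le> B"
  "ladder_E A B C (True, y) (False, x) \<longleftrightarrow> (x, y) \<in> C \<and> x \<le> A \<and> y \<le> B"
  by (auto simp: ladder_E_def)

lemma ladder_E_commute: "ladder_E A B C u v \<longleftrightarrow> ladder_E A B C v u"
  by (auto simp: ladder_E_def)

lemma local_comp_commute:
  assumes "\<And>x y. E x y \<longleftrightarrow> E y x"
  shows "local_comp E v x y \<longleftrightarrow> local_comp E v y x"
  using assms by (auto simp: local_comp_def)

lemma ladder_swap_iso:
  "graph_iso (ladder_V A B) (ladder_E A B C) (ladder_V B A) (ladder_E B A (prod.swap ` C))"
  unfolding graph_iso_def
proof (intro exI conjI)
  let ?f = "\<lambda>v::lvertex. (\<not> fst v, snd v)"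
  show "bij_betw ?f (ladder_V A B) (ladder_V B A)"
    by (rule bij_betw_byWitness[where f' = ?f]) (auto simp: ladder_V_def)
  show "\<forall>x\<in>ladder_V A B. \<forall>y\<in>ladder_V A B.
          ladder_E A B C x y \<longleftrightarrow> ladder_E B A (prod.swap ` C) (?f x) (?f y)"
    by (auto simp: ladder_E_def ladder_V_def)
qed

lemma ladder_local_comp_adj:
  assumes "\<And>a y. a \<le> A \<Longrightarrow> (False, a) \<noteq> v \<Longrightarrow> y \<in> ladder_V A B - {v} \<Longrightarrow>
      local_comp (ladder_E A B C) v (False, a) y \<longleftrightarrow> ladder_E A' B' C' (f (False, a)) (f y)"
    and "\<And>a b. a \<le> B \<Longrightarrow> b \<le> B \<Longrightarrow> (True, a) \<noteq> v \<Longrightarrow> (True, b) \<noteq> v \<Longrightarrow>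
      local_comp (ladder_E A B C) v (True, a) (True, b)
        \<longleftrightarrow> ladder_E A' B' C' (f (True, a)) (f (True, b))"
    and "x \<in> ladder_V A B - {v}" "y \<in> ladder_V A B - {v}"
  shows "local_comp (ladder_E A B C) v x y \<longleftrightarrow> ladder_E A' B' C' (f x) (f y)"
proof -
  obtain bx a by' b where xy: "x = (bx, a)" "y = (by', b)" by fastforce
  consider "\<not> bx" | "bx" "by'" | "bx" "\<not> by'" by blast
  then show ?thesis
  proof cases
    case 1
    then show ?thesis using assms(1)[of a y] assms(3, 4) unfolding xy by simp
  next
    case 2
    then show ?thesis using assms(2)[of a b] assms(3, 4) unfolding xy by simp
  next
    case 3
    then have "local_comp (ladder_E A B C) v y x \<longleftrightarrow> ladder_E A' B' C' (f y) (f x)"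
      using assms(1)[of b x] assms(3, 4) unfolding xy by simp
    then show ?thesis by (metis ladder_E_commute local_comp_commute)
  qed
qed

text \<open>The chords left after deleting \<open>p\<^sub>i\<close> from the rail \<open>P\<close> and renumbering it: if \<open>p\<^sub>i q\<^sub>j\<close> was a
  chord, the chords from the former neighbours \<open>p\<^sub>i\<^sub>-\<^sub>1\<close> and \<open>p\<^sub>i\<^sub>+\<^sub>1\<close> (now \<open>p\<^sub>i\<^sub>-\<^sub>1\<close> and \<open>p\<^sub>i\<close>) to
  \<open>q\<^sub>j\<close> are toggled.\<close>

definition removed_chords :: "(nat \<times> nat) set \<Rightarrow> nat \<Rightarrow> nat \<Rightarrow> (nat \<times> nat) set" where
  "removed_chords C i j = {(x, y).
     if x < i then ((x, y) \<in> C) \<noteq> ((i, j) \<in> C \<and> y = j \<and> Suc x = i)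
     else ((Suc x, y) \<in> C) \<noteq> ((i, j) \<in> C \<and> y = j \<and> x = i)}"

text \<open>The chords after deleting \<open>p\<^sub>i\<close> when its chords are exactly \<open>p\<^sub>i q\<^sub>j\<close> and \<open>p\<^sub>i q\<^sub>j\<^sub>+\<^sub>1\<close>:
  the new rails are \<open>p\<^sub>0 \<dots> p\<^sub>i\<^sub>-\<^sub>1 q\<^sub>j\<^sub>+\<^sub>1 \<dots> q\<^sub>B\<close> and \<open>q\<^sub>0 \<dots> q\<^sub>j p\<^sub>i\<^sub>+\<^sub>1 \<dots> p\<^sub>A\<close>, so the part of
  the ladder beyond \<open>p\<^sub>i\<close> is turned over, and every adjacency among the four neighbours of
  \<open>p\<^sub>i\<close> is toggled.\<close>

definition twisted_chords :: "(nat \<times> nat) set \<Rightarrow> nat \<Rightarrow> nat \<Rightarrow> (nat \<times> nat) set" where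
  "twisted_chords C i j = {(x, y).
     if x < i then (if y \<le> j then ((x, y) \<in> C) \<noteq> (Suc x = i \<and> y = j) else Suc x = i \<and> y = Suc j)
     else (if y \<le> j then False else ((y + i - j, x + Suc j - i) \<in> C) \<noteq> (x = i \<and> y = Suc j))}"

lemma ladder_minor_remove_vertex:
  assumes i: "0 < i" "i < A" and deg: "\<forall>y. (i, y) \<in> C \<longrightarrow> y = j"
  shows "has_vertex_minor (ladder_V A B) (ladder_E A B C)
           (ladder_V (A - 1) B) (ladder_E (A - 1) B (removed_chords C i j))"
proof -
  let ?v = "(False, i) :: lvertex" and ?C' = "removed_chords C i j"
  define s where "s a = (if a < i then a else a - 1)" for a
  define f where "f v = (if fst v then v else (False, s (snd v)))" for v :: lvertex
  define g where "g v = (if fst v then v else (False, if snd v < i then snd v else Suc (snd v)))"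
    for v :: lvertex
  have bij: "bij_betw f (ladder_V A B - {?v}) (ladder_V (A - 1) B)"
    by (rule bij_betw_byWitness[where f' = g])
      (use i in \<open>auto simp: f_def g_def s_def ladder_V_def split: if_splits\<close>)
  have nbP: "ladder_E A B C ?v (False, a) \<longleftrightarrow> a = Suc i \<or> i = Suc a" if "a \<le> A" for a
    using that i by auto
  have nbQ: "ladder_E A B C ?v (True, b) \<longleftrightarrow> b = j \<and> (i, j) \<in> C \<and> b \<le> B" for b
    using deg i by auto
  show ?thesis
  proof (rule has_vertex_minor_by_local_comp_delete[OF _ bij])
    show "?v \<in> ladder_V A B" using i by simp
  next
    fix x y assume "x \<in> ladder_V A B - {?v}" "y \<in> ladder_V A B - {?v}"
    then show "local_comp (ladder_E A B C) ?v x y \<longleftrightarrow> ladder_E (A - 1) B ?C' (f x) (f y)"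
    proof (rule ladder_local_comp_adj[rotated 2])
      fix a y assume a: "a \<le> A" "(False, a) \<noteq> ?v" and y: "y \<in> ladder_V A B - {?v}"
      obtain by' b where yb: "y = (by', b)" by fastforce
      show "local_comp (ladder_E A B C) ?v (False, a) y
        \<longleftrightarrow> ladder_E (A - 1) B ?C' (f (False, a)) (f y)"
      proof (cases by')
        case False
        then have b: "b \<le> A" "b \<noteq> i" using y yb by auto
        have "local_comp (ladder_E A B C) ?v (False, a) y \<longleftrightarrow>
            (if (a = Suc i \<or> i = Suc a) \<and> (b = Suc i \<or> i = Suc b) \<and> a \<noteq> b
             then \<not> (b = Suc a \<or> a = Suc b) else b = Suc a \<or> a = Suc b)"
          using a b nbP False unfolding yb by (simp add: local_comp_iff)
        also have "\<dots> \<longleftrightarrow> s b = Suc (s a) \<or> s a = Suc (s b)"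
          using a b i unfolding s_def by (cases "a < i"; cases "b < i") auto
        finally show ?thesis using a b i False unfolding yb f_def s_def by auto
      next
        case True
        then have b: "b \<le> B" using y yb by auto
        have "local_comp (ladder_E A B C) ?v (False, a) y \<longleftrightarrow>
            (if (a = Suc i \<or> i = Suc a) \<and> b = j \<and> (i, j) \<in> C then (a, b) \<notin> C else (a, b) \<in> C)"
          using a b nbP nbQ True i unfolding yb by (auto simp: local_comp_iff)
        also have "\<dots> \<longleftrightarrow> (s a, b) \<in> ?C'"
          using a i unfolding removed_chords_def s_def by (cases "a < i") auto
        finally show ?thesis using a b i True unfolding yb f_def s_def by auto
      qed
    next
      fix a b assume "a \<le> B" "b \<le> B"
      then show "local_comp (ladder_E A B C) ?v (True, a) (True, b) \<longleftrightarrow>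
          ladder_E (A - 1) B ?C' (f (True, a)) (f (True, b))"
        using deg i by (auto simp: local_comp_iff f_def)
    qed
  qed
qed

lemma ladder_minor_twist:
  assumes i: "0 < i" "i < A" and j: "Suc j \<le> B"
    and deg: "\<forall>y. (i, y) \<in> C \<longleftrightarrow> y = j \<or> y = Suc j"
    and left: "\<forall>x y. (x, y) \<in> C \<longrightarrow> x < i \<longrightarrow> y \<le> j"
    and right: "\<forall>x y. (x, y) \<in> C \<longrightarrow> i < x \<longrightarrow> Suc j \<le> y"
  shows "has_vertex_minor (ladder_V A B) (ladder_E A B C)
           (ladder_V (i + B - Suc j) (j + A - i))
           (ladder_E (i + B - Suc j) (j + A - i) (twisted_chords C i j))"
proof -
  let ?v = "(False, i) :: lvertex"
  let ?A' = "i + B - Suc j" and ?B' = "j + A - i" and ?C' = "twisted_chords C i j"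
  define f where "f v = (if fst v then (if snd v \<le> j then v else (False, i + snd v - Suc j))
                         else (if snd v < i then v else (True, j + snd v - i)))" for v :: lvertex
  define g where "g v = (if fst v then (if snd v \<le> j then v else (False, snd v + i - j))
                         else (if snd v < i
                           then v else (True, snd v + Suc j - i)))" for v :: lvertex
  have bij: "bij_betw f (ladder_V A B - {?v}) (ladder_V ?A' ?B')"
    by (rule bij_betw_byWitness[where f' = g])
      (use i j in \<open>auto simp: f_def g_def ladder_V_def split: if_splits\<close>)
  have nbP: "ladder_E A B C ?v (False, a) \<longleftrightarrow> a = Suc i \<or> i = Suc a" if "a \<le> A" for a
    using that i by auto
  have nbQ: "ladder_E A B C ?v (True, b) \<longleftrightarrow> b = j \<or> b = Suc j" for b
    using deg i j by auto
  show ?thesis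
  proof (rule has_vertex_minor_by_local_comp_delete[OF _ bij])
    show "?v \<in> ladder_V A B" using i by simp
  next
    fix x y assume "x \<in> ladder_V A B - {?v}" "y \<in> ladder_V A B - {?v}"
    then show "local_comp (ladder_E A B C) ?v x y \<longleftrightarrow> ladder_E ?A' ?B' ?C' (f x) (f y)"
    proof (rule ladder_local_comp_adj[rotated 2])
      fix a y assume a: "a \<le> A" "(False, a) \<noteq> ?v" and y: "y \<in> ladder_V A B - {?v}"
      obtain by' b where yb: "y = (by', b)" by fastforce
      show "local_comp (ladder_E A B C) ?v (False, a) y \<longleftrightarrow> ladder_E ?A' ?B' ?C' (f (False, a)) (f y)"
      proof (cases by')
        case False
        then have b: "b \<le> A" "b \<noteq> i" using y yb by auto
        have "local_comp (ladder_E A B C) ?v (False, a) y \<longleftrightarrow>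
            (if (a = Suc i \<or> i = Suc a) \<and> (b = Suc i \<or> i = Suc b) \<and> a \<noteq> b
             then \<not> (b = Suc a \<or> a = Suc b) else b = Suc a \<or> a = Suc b)"
          using a b nbP False unfolding yb by (simp add: local_comp_iff)
        then show ?thesis using a b i j False unfolding yb twisted_chords_def
          by (cases "a < i"; cases "b < i") (auto simp: f_def)
      next
        case True
        then have yb: "y = (True, b)" and b: "b \<le> B" using y yb by auto
        have "local_comp (ladder_E A B C) ?v (False, a) y \<longleftrightarrow>
            (if (a = Suc i \<or> i = Suc a) \<and> (b = j \<or> b = Suc j) then (a, b) \<notin> C else (a, b) \<in> C)"
          unfolding local_comp_iff yb nbQ nbP[OF a(1)] using a b by simp
        moreover have "(a, b) \<notin> C" if "a < i \<and> \<not> b \<le> j \<or> \<not> a < i \<and> b \<le> j"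
          using that left right a by force
        ultimately show ?thesis using a b i j unfolding yb twisted_chords_def
          by (cases "a < i"; cases "b \<le> j") (auto simp: f_def)
      qed
    next
      fix a b assume ab: "a \<le> B" "b \<le> B"
      have "local_comp (ladder_E A B C) ?v (True, a) (True, b) \<longleftrightarrow>
          (if (a = j \<or> a = Suc j) \<and> (b = j \<or> b = Suc j) \<and> a \<noteq> b
           then \<not> (b = Suc a \<or> a = Suc b) else b = Suc a \<or> a = Suc b)"
        unfolding local_comp_iff nbQ using ab by simp
      then show "local_comp (ladder_E A B C) ?v (True, a) (True, b) \<longleftrightarrow>
          ladder_E ?A' ?B' ?C' (f (True, a)) (f (True, b))"
        using ab i j unfolding twisted_chords_def
        by (cases "a \<le> j"; cases "b \<le> j") (auto simp: f_def)
    qed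
  qed
qed

section \<open>Words\<close>

text \<open>A word \<open>[(a\<^sub>1, b\<^sub>1), \<dots>, (a\<^sub>k, b\<^sub>k)]\<close> describes the ladder whose chords are its partial sums
  \<open>(0, 0), (a\<^sub>1, b\<^sub>1), (a\<^sub>1 + a\<^sub>2, b\<^sub>1 + b\<^sub>2), \<dots>\<close>; the letter \<open>(a, b)\<close> is a face of the ladder, an
  induced cycle formed by two consecutive chords, \<open>a\<close> edges of \<open>P\<close> and \<open>b\<close> edges of \<open>Q\<close>.\<close>

fun chord :: "(nat \<times> nat) list \<Rightarrow> nat \<Rightarrow> nat \<Rightarrow> bool" where
  "chord [] x y \<longleftrightarrow> x = 0 \<and> y = 0"
| "chord (s # w) x y \<longleftrightarrow>
     x = 0 \<and> y = 0 \<or> fst s \<le> x \<and> snd s \<le> y \<and> chord w (x - fst s) (y - snd s)"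

fun span_P :: "(nat \<times> nat) list \<Rightarrow> nat" where
  "span_P [] = 0"
| "span_P (s # w) = fst s + span_P w"

fun span_Q :: "(nat \<times> nat) list \<Rightarrow> nat" where
  "span_Q [] = 0"
| "span_Q (s # w) = snd s + span_Q w"

text \<open>\<open>corners w\<close> lists the chords of \<open>w\<close>; it lets the simplifier evaluate \<open>chord\<close> on words
  given letter by letter.\<close>

fun corners :: "(nat \<times> nat) list \<Rightarrow> (nat \<times> nat) list" where
  "corners [] = [(0, 0)]"
| "corners (s # w) = (0, 0) # map (\<lambda>p. (fst s + fst p, snd s + snd p)) (corners w)"

definition chords :: "(nat \<times> nat) list \<Rightarrow> (nat \<times> nat) set" where
  "chords w = {(x, y). chord w x y}"

abbreviation word_V :: "(nat \<times> nat) list \<Rightarrow> lvertex set" where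
  "word_V w \<equiv> ladder_V (span_P w) (span_Q w)"

abbreviation word_E :: "(nat \<times> nat) list \<Rightarrow> lvertex \<Rightarrow> lvertex \<Rightarrow> bool" where
  "word_E w \<equiv> ladder_E (span_P w) (span_Q w) (chords w)"

definition word_minor :: "(nat \<times> nat) list \<Rightarrow> (nat \<times> nat) list \<Rightarrow> bool" where
  "word_minor w w' \<longleftrightarrow> has_vertex_minor (word_V w) (word_E w) (word_V w') (word_E w')"

lemma word_minor_refl: "word_minor w w"
  unfolding word_minor_def by (rule has_vertex_minor_of_iso[OF graph_iso_refl])

lemma word_minor_trans: "word_minor w1 w2 \<Longrightarrow> word_minor w2 w3 \<Longrightarrow> word_minor w1 w3"
  unfolding word_minor_def by (rule has_vertex_minor_trans)

lemma span_P_append [simp]: "span_P (u @ v) = span_P u + span_P v" by (induction u) auto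
lemma span_Q_append [simp]: "span_Q (u @ v) = span_Q u + span_Q v" by (induction u) auto

lemma chord_le_span: "chord w x y \<Longrightarrow> x \<le> span_P w \<and> y \<le> span_Q w"
  by (induction w arbitrary: x y) force+

lemma chord_span: "chord w (span_P w) (span_Q w)"
  by (induction w) auto

lemma chord_0 [simp]: "chord w 0 0"
  by (cases w) auto

lemma chord_iff_corners: "chord w x y \<longleftrightarrow> (x, y) \<in> set (corners w)"
proof (induction w arbitrary: x y)
  case Nil then show ?case by simp
next
  case (Cons s w)
  show ?case
  proof
    assume "chord (s # w) x y"
    show "(x, y) \<in> set (corners (s # w))"
    proof (cases "x = 0 \<and> y = 0")
      case True then show ?thesis by simp
    next
      case False
      then have h: "fst s \<le> x" "snd s \<le> y" "(x - fst s, y - snd s) \<in> set (corners w)"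
        using \<open>chord (s # w) x y\<close> Cons.IH by auto
      have "(x, y) = (\<lambda>p. (fst s + fst p, snd s + snd p)) (x - fst s, y - snd s)" using h by simp
      then have "(x, y) \<in> (\<lambda>p. (fst s + fst p, snd s + snd p)) ` set (corners w)"
        using h(3) by (rule image_eqI)
      then show ?thesis by simp
    qed
  next
    assume "(x, y) \<in> set (corners (s # w))"
    then show "chord (s # w) x y" using Cons.IH by auto
  qed
qed

lemma chord_append: "chord (u @ v) x y
  \<longleftrightarrow> chord u x y \<or> (span_P u \<le> x \<and> span_Q u \<le> y \<and> chord v (x - span_P u) (y - span_Q u))"
proof (induction u arbitrary: x y)
  case Nil then show ?case by auto
next
  case (Cons s u)
  show ?case
  proof (cases "x = 0 \<and> y = 0")
    case True then show ?thesis by simp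
  next
    case False
    then show ?thesis using Cons.IH[of "x - fst s" "y - snd s"] chord_span[of u]
      by (auto simp: diff_diff_add)
  qed
qed

lemma chord_append3: "chord (u @ m @ v) x y \<longleftrightarrow> chord u x y
   \<or> (\<exists>p \<in> set (corners m). x = span_P u + fst p \<and> y = span_Q u + snd p)
   \<or> (span_P u + span_P m \<le> x \<and> span_Q u + span_Q m \<le> y
     \<and> chord v (x - (span_P u + span_P m)) (y - (span_Q u + span_Q m)))"
proof -
  have EQ: "(span_P u \<le> x \<and> span_Q u \<le> y \<and> chord m (x - span_P u) (y - span_Q u)) \<longleftrightarrow>
          (\<exists>p \<in> set (corners m). x = span_P u + fst p \<and> y = span_Q u + snd p)"
  proof
    assume h: "span_P u \<le> x \<and> span_Q u \<le> y \<and> chord m (x - span_P u) (y - span_Q u)"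
    then have "(x - span_P u, y - span_Q u) \<in> set (corners m)" by (simp add: chord_iff_corners)
    moreover have "x = span_P u + fst (x - span_P u, y - span_Q u)
      \<and> y = span_Q u + snd (x - span_P u, y - span_Q u)" using h by simp
    ultimately show "\<exists>p \<in> set (corners m). x = span_P u + fst p \<and> y = span_Q u + snd p" by blast
  next
    assume "\<exists>p \<in> set (corners m). x = span_P u + fst p \<and> y = span_Q u + snd p"
    then obtain p where "p \<in> set (corners m)" "x = span_P u + fst p" "y = span_Q u + snd p" by blast
    then show "span_P u \<le> x \<and> span_Q u \<le> y \<and> chord m (x - span_P u) (y - span_Q u)"
      by (simp add: chord_iff_corners)
  qed
  have EQ2: "(span_P u \<le> x \<and> span_Q u \<le> y \<and> span_P m \<le> x - span_P u \<and> span_Q m \<le> y - span_Q u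
    \<and> chord v (x - span_P u - span_P m) (y - span_Q u - span_Q m))
     \<longleftrightarrow>
       (span_P u + span_P m \<le> x \<and> span_Q u + span_Q m \<le> y
         \<and> chord v (x - (span_P u + span_P m)) (y - (span_Q u + span_Q m)))"
    by (auto simp: diff_diff_add)
  have "chord (u @ m @ v) x y
    \<longleftrightarrow> chord u x y \<or> (span_P u \<le> x \<and> span_Q u \<le> y \<and> chord (m @ v) (x - span_P u) (y - span_Q u))"
    by (rule chord_append)
  also have "\<dots>
    \<longleftrightarrow> chord u x y \<or> (span_P u \<le> x \<and> span_Q u \<le> y \<and> chord m (x - span_P u) (y - span_Q u)) \<or>
       (span_P u \<le> x \<and> span_Q u \<le> y \<and> span_P m \<le> x - span_P u \<and> span_Q m \<le> y - span_Q u
         \<and> chord v (x - span_P u - span_P m) (y - span_Q u - span_Q m))"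
    by (auto simp add: chord_append)
  finally show ?thesis unfolding EQ EQ2 .
qed

lemma chord_map_swap: "chord (map prod.swap w) x y \<longleftrightarrow> chord w y x"
  by (induction w arbitrary: x y) auto

lemma span_P_map_swap [simp]: "span_P (map prod.swap w) = span_Q w" by (induction w) auto
lemma span_Q_map_swap [simp]: "span_Q (map prod.swap w) = span_P w" by (induction w) auto

lemma chords_map_swap: "chords (map prod.swap w) = prod.swap ` chords w"
  by (auto simp: chords_def chord_map_swap image_iff)

lemma word_minor_map_swapD:
  assumes "word_minor (map prod.swap w) (map prod.swap w')"
  shows "word_minor w w'"
proof -
  have iso: "graph_iso (word_V v) (word_E v) (word_V (map prod.swap v)) (word_E (map prod.swap v))"
    for v :: "(nat \<times> nat) list"
    using ladder_swap_iso[of "span_P v" "span_Q v" "chords v"] by (simp add: chords_map_swap)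
  have "has_vertex_minor (word_V w) (word_E w) (word_V (map prod.swap w'))
    (word_E (map prod.swap w'))"
    using has_vertex_minor_of_iso[OF iso[of w]] assms[unfolded word_minor_def]
    by (rule has_vertex_minor_trans)
  moreover have "has_vertex_minor (word_V (map prod.swap w')) (word_E (map prod.swap w'))
      (word_V w') (word_E w')"
    using has_vertex_minor_of_iso[OF graph_iso_sym[OF iso[of w']]] .
  ultimately show ?thesis unfolding word_minor_def by (rule has_vertex_minor_trans)
qed

lemma word_minor_remove_vertex:
  assumes i: "0 < i" "i < span_P w" and deg: "\<forall>y. chord w i y \<longrightarrow> y = j"
    and A': "span_P w' = span_P w - 1" and B': "span_Q w' = span_Q w"
    and C': "\<And>x y. chord w' x y \<longleftrightarrow> (x, y) \<in> removed_chords (chords w) i j"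
  shows "word_minor w w'"
proof -
  have "chords w' = removed_chords (chords w) i j" using C' by (auto simp: chords_def)
  moreover have "\<forall>y. (i, y) \<in> chords w \<longrightarrow> y = j" using deg by (auto simp: chords_def)
  ultimately show ?thesis
    unfolding word_minor_def A' B' using ladder_minor_remove_vertex[OF i] by metis
qed

lemma word_minor_split_P:
  assumes "(Suc p1, y1) \<noteq> (1, 0)" "(Suc p2, y2) \<noteq> (1, 0)"
  shows "word_minor (u @ [(Suc p1, y1), (Suc p2, y2)] @ v) (u @ [(p1, y1), (1, 0), (p2, y2)] @ v)"
proof -
  let ?a = "span_P u" and ?b = "span_Q u"
  let ?w = "u @ [(Suc p1, y1), (Suc p2, y2)] @ v"
  let ?w' = "u @ [(p1, y1), (1, 0), (p2, y2)] @ v"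
  have W: "chord ?w x y \<longleftrightarrow> chord u x y \<or> (x = ?a \<and> y = ?b) \<or> (x = ?a + Suc p1 \<and> y = ?b + y1)
     \<or> (x = ?a + Suc p1 + Suc p2 \<and> y = ?b + y1 + y2)
     \<or> (?a + Suc p1 + Suc p2 \<le> x \<and> ?b + y1 + y2 \<le> y
       \<and> chord v (x - (?a + Suc p1 + Suc p2)) (y - (?b + y1 + y2)))" for x y
    using chord_append3[of u "[(Suc p1, y1), (Suc p2, y2)]" v x y] by (simp add: add.assoc)
  have W': "chord ?w' x y \<longleftrightarrow> chord u x y \<or> (x = ?a \<and> y = ?b) \<or> (x = ?a + p1 \<and> y = ?b + y1)
     \<or> (x = ?a + Suc p1 \<and> y = ?b + y1)
     \<or> (x = ?a + Suc p1 + p2 \<and> y = ?b + y1 + y2)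
     \<or> (?a + Suc p1 + p2 \<le> x \<and> ?b + y1 + y2 \<le> y
       \<and> chord v (x - (?a + Suc p1 + p2)) (y - (?b + y1 + y2)))" for x y
    using chord_append3[of u "[(p1, y1), (1, 0), (p2, y2)]" v x y] by (simp add: add.assoc)
  show ?thesis
  proof (rule word_minor_remove_vertex[where i = "?a + Suc p1" and j = "?b + y1"])
    show "0 < ?a + Suc p1" by simp
    show "?a + Suc p1 < span_P ?w" by simp
    show "\<forall>y. chord ?w (?a + Suc p1) y \<longrightarrow> y = ?b + y1"
      unfolding W by (auto dest: chord_le_span)
    show "span_P ?w' = span_P ?w - 1" by simp
    show "span_Q ?w' = span_Q ?w" by simp
    fix x y
    show "chord ?w' x y \<longleftrightarrow> (x, y) \<in> removed_chords (chords ?w) (?a + Suc p1) (?b + y1)"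
      using chord_span[of u] assms unfolding removed_chords_def chords_def W W'
        by (auto dest: chord_le_span)
  qed
qed

lemma word_minor_absorb_left_P:
  assumes "(x0, y0) \<noteq> (0, 0)" "(Suc p2, y2) \<noteq> (1, 0)"
  shows "word_minor (u @ (x0, y0) # (1, 0) # (Suc p2, y2) # v) (u @ (Suc x0, y0) # (p2, y2) # v)"
proof -
  let ?a = "span_P u" and ?b = "span_Q u"
  let ?w = "u @ (x0, y0) # (1, 0) # (Suc p2, y2) # v"
  let ?w' = "u @ (Suc x0, y0) # (p2, y2) # v"
  have W: "chord ?w x y \<longleftrightarrow> chord u x y \<or> (x = ?a \<and> y = ?b) \<or> (x = ?a + x0 \<and> y = ?b + y0)
     \<or> (x = ?a + Suc x0 \<and> y = ?b + y0)
     \<or> (x = ?a + Suc x0 + Suc p2 \<and> y = ?b + y0 + y2)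
     \<or> (?a + Suc x0 + Suc p2 \<le> x \<and> ?b + y0 + y2 \<le> y
       \<and> chord v (x - (?a + Suc x0 + Suc p2)) (y - (?b + y0 + y2)))" for x y
    using chord_append3[of u "[(x0, y0), (1, 0), (Suc p2, y2)]" v x y] by (simp add: add.assoc)
  have W': "chord ?w' x y \<longleftrightarrow> chord u x y \<or> (x = ?a \<and> y = ?b) \<or> (x = ?a + Suc x0 \<and> y = ?b + y0)
     \<or> (x = ?a + Suc x0 + p2 \<and> y = ?b + y0 + y2)
     \<or> (?a + Suc x0 + p2 \<le> x \<and> ?b + y0 + y2 \<le> y
       \<and> chord v (x - (?a + Suc x0 + p2)) (y - (?b + y0 + y2)))" for x y
    using chord_append3[of u "[(Suc x0, y0), (p2, y2)]" v x y] by (simp add: add.assoc)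
  show ?thesis
  proof (rule word_minor_remove_vertex[where i = "?a + Suc x0" and j = "?b + y0"])
    show "0 < ?a + Suc x0" by simp
    show "?a + Suc x0 < span_P ?w" by simp
    show "\<forall>y. chord ?w (?a + Suc x0) y \<longrightarrow> y = ?b + y0"
      unfolding W by (auto dest: chord_le_span)
    show "span_P ?w' = span_P ?w - 1" by simp
    show "span_Q ?w' = span_Q ?w" by simp
    fix x y
    show "chord ?w' x y \<longleftrightarrow> (x, y) \<in> removed_chords (chords ?w) (?a + Suc x0) (?b + y0)"
      using chord_span[of u] assms unfolding removed_chords_def chords_def W W'
        by (auto dest: chord_le_span)
  qed
qed

lemma word_minor_absorb_right_P:
  assumes "(Suc p1, y1) \<noteq> (1, 0)" "(x3, y3) \<noteq> (0, 0)"
  shows "word_minor (u @ (Suc p1, y1) # (1, 0) # (x3, y3) # v) (u @ (p1, y1) # (Suc x3, y3) # v)"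
proof -
  let ?a = "span_P u" and ?b = "span_Q u"
  let ?w = "u @ (Suc p1, y1) # (1, 0) # (x3, y3) # v"
  let ?w' = "u @ (p1, y1) # (Suc x3, y3) # v"
  have W: "chord ?w x y \<longleftrightarrow> chord u x y \<or> (x = ?a \<and> y = ?b) \<or> (x = ?a + Suc p1 \<and> y = ?b + y1)
     \<or> (x = ?a + Suc (Suc p1) \<and> y = ?b + y1)
     \<or> (x = ?a + Suc (Suc p1) + x3 \<and> y = ?b + y1 + y3)
     \<or> (?a + Suc (Suc p1) + x3 \<le> x \<and> ?b + y1 + y3 \<le> y
       \<and> chord v (x - (?a + Suc (Suc p1) + x3)) (y - (?b + y1 + y3)))" for x y
    using chord_append3[of u "[(Suc p1, y1), (1, 0), (x3, y3)]" v x y] by (simp add: add.assoc)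
  have W': "chord ?w' x y \<longleftrightarrow> chord u x y \<or> (x = ?a \<and> y = ?b) \<or> (x = ?a + p1 \<and> y = ?b + y1)
     \<or> (x = ?a + Suc p1 + x3 \<and> y = ?b + y1 + y3)
     \<or> (?a + Suc p1 + x3 \<le> x \<and> ?b + y1 + y3 \<le> y
       \<and> chord v (x - (?a + Suc p1 + x3)) (y - (?b + y1 + y3)))" for x y
    using chord_append3[of u "[(p1, y1), (Suc x3, y3)]" v x y] by (simp add: add.assoc)
  show ?thesis
  proof (rule word_minor_remove_vertex[where i = "?a + Suc p1" and j = "?b + y1"])
    show "0 < ?a + Suc p1" by simp
    show "?a + Suc p1 < span_P ?w" by simp
    show "\<forall>y. chord ?w (?a + Suc p1) y \<longrightarrow> y = ?b + y1"
      unfolding W by (auto dest: chord_le_span)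
    show "span_P ?w' = span_P ?w - 1" by simp
    show "span_Q ?w' = span_Q ?w" by simp
    fix x y
    show "chord ?w' x y \<longleftrightarrow> (x, y) \<in> removed_chords (chords ?w) (?a + Suc p1) (?b + y1)"
      using chord_span[of u] assms unfolding removed_chords_def chords_def W W'
        by (auto dest: chord_le_span)
  qed
qed

lemma word_minor_merge_P:
  assumes "(x0, y0) \<noteq> (0, 0)" "(x3, y3) \<noteq> (0, 0)"
  shows "word_minor (u @ (x0, y0) # (1, 0) # (1, 0) # (x3, y3) # v)
    (u @ (Suc (x0 + x3), y0 + y3) # v)"
proof -
  let ?a = "span_P u" and ?b = "span_Q u"
  let ?w = "u @ (x0, y0) # (1, 0) # (1, 0) # (x3, y3) # v"
  let ?w' = "u @ (Suc (x0 + x3), y0 + y3) # v"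
  have W: "chord ?w x y \<longleftrightarrow> chord u x y \<or> (x = ?a \<and> y = ?b) \<or> (x = ?a + x0 \<and> y = ?b + y0)
     \<or> (x = ?a + Suc x0 \<and> y = ?b + y0)
     \<or> (x = ?a + Suc (Suc x0) \<and> y = ?b + y0)
     \<or> (x = ?a + Suc (Suc x0) + x3 \<and> y = ?b + y0 + y3)
     \<or> (?a + Suc (Suc x0) + x3 \<le> x \<and> ?b + y0 + y3 \<le> y
       \<and> chord v (x - (?a + Suc (Suc x0) + x3)) (y - (?b + y0 + y3)))" for x y
    using chord_append3[of u "[(x0, y0), (1, 0), (1, 0), (x3, y3)]" v x y] by (simp add: add.assoc)
  have W': "chord ?w' x y \<longleftrightarrow> chord u x y \<or> (x = ?a \<and> y = ?b)
     \<or> (x = ?a + Suc x0 + x3 \<and> y = ?b + y0 + y3)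
     \<or> (?a + Suc x0 + x3 \<le> x \<and> ?b + y0 + y3 \<le> y
       \<and> chord v (x - (?a + Suc x0 + x3)) (y - (?b + y0 + y3)))" for x y
    using chord_append3[of u "[(Suc (x0 + x3), y0 + y3)]" v x y] by (simp add: add.assoc)
  show ?thesis
  proof (rule word_minor_remove_vertex[where i = "?a + Suc x0" and j = "?b + y0"])
    show "0 < ?a + Suc x0" by simp
    show "?a + Suc x0 < span_P ?w" by simp
    show "\<forall>y. chord ?w (?a + Suc x0) y \<longrightarrow> y = ?b + y0"
      unfolding W by (auto dest: chord_le_span)
    show "span_P ?w' = span_P ?w - 1" by simp
    show "span_Q ?w' = span_Q ?w" by simp
    fix x y
    show "chord ?w' x y \<longleftrightarrow> (x, y) \<in> removed_chords (chords ?w) (?a + Suc x0) (?b + y0)"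
      using chord_span[of u] assms unfolding removed_chords_def chords_def W W'
        by (auto dest: chord_le_span)
  qed
qed

lemma word_minor_contract_P:
  shows "word_minor (u @ (Suc (Suc p),y1) # v) (u @ (Suc p, y1) # v)"
proof -
  let ?a = "span_P u" and ?b = "span_Q u"
  let ?w = "u @ (Suc (Suc p),y1) # v"
  let ?w' = "u @ (Suc p, y1) # v"
  have W: "chord ?w x y \<longleftrightarrow> chord u x y \<or> (x = ?a \<and> y = ?b)
     \<or> (x = ?a + Suc (Suc p) \<and> y = ?b + y1)
     \<or> (?a + Suc (Suc p) \<le> x \<and> ?b + y1 \<le> y \<and> chord v (x - (?a + Suc (Suc p))) (y - (?b + y1)))"
       for x y
    using chord_append3[of u "[(Suc (Suc p),y1)]" v x y] by (simp add: add.assoc)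
  have W': "chord ?w' x y \<longleftrightarrow> chord u x y \<or> (x = ?a \<and> y = ?b)
     \<or> (x = ?a + Suc p \<and> y = ?b + y1)
     \<or> (?a + Suc p \<le> x \<and> ?b + y1 \<le> y \<and> chord v (x - (?a + Suc p)) (y - (?b + y1)))" for x y
    using chord_append3[of u "[(Suc p, y1)]" v x y] by (simp add: add.assoc)
  show ?thesis
  proof (rule word_minor_remove_vertex[where i = "?a + 1" and j = "?b"])
    show "0 < ?a + 1" by simp
    show "?a + 1 < span_P ?w" by simp
    show "\<forall>y. chord ?w (?a + 1) y \<longrightarrow> y = ?b"
      unfolding W by (auto dest: chord_le_span)
    show "span_P ?w' = span_P ?w - 1" by simp
    show "span_Q ?w' = span_Q ?w" by simp
    fix x y
    show "chord ?w' x y \<longleftrightarrow> (x, y) \<in> removed_chords (chords ?w) (?a + 1) ?b"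
      using chord_span[of u] unfolding removed_chords_def chords_def W W'
        by (auto dest: chord_le_span)
  qed
qed


lemma word_minor_twist:
  assumes i: "0 < i" "i < span_P w" and j: "Suc j \<le> span_Q w"
    and deg: "\<forall>y. chord w i y \<longleftrightarrow> y = j \<or> y = Suc j"
    and left: "\<forall>x y. chord w x y \<longrightarrow> x < i \<longrightarrow> y \<le> j"
    and right: "\<forall>x y. chord w x y \<longrightarrow> i < x \<longrightarrow> Suc j \<le> y"
    and A': "span_P w' = i + span_Q w - Suc j" and B': "span_Q w' = j + span_P w - i"
    and C': "\<And>x y. chord w' x y \<longleftrightarrow> (x, y) \<in> twisted_chords (chords w) i j"
  shows "word_minor w w'"
proof -
  have "chords w' = twisted_chords (chords w) i j" using C' by (auto simp: chords_def)
  moreover have "\<forall>y. (i, y) \<in> chords w \<longleftrightarrow> y = j \<or> y = Suc j"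
    "\<forall>x y. (x, y) \<in> chords w \<longrightarrow> x < i \<longrightarrow> y \<le> j"
    "\<forall>x y. (x, y) \<in> chords w \<longrightarrow> i < x \<longrightarrow> Suc j \<le> y"
    using deg left right by (auto simp: chords_def)
  ultimately show ?thesis
    unfolding word_minor_def A' B' using ladder_minor_twist[OF i j] by metis
qed

lemma word_minor_twist_merge_P:
  assumes "(x0, y0) \<noteq> (0, 0)" "(x3, y3) \<noteq> (0, 0)"
  shows "word_minor (u @ (x0, y0) # (1, 0) # (0, 1) # (1, 0) # (x3, y3) # v)
    (u @ (x0, Suc y0) # (Suc y3, x3) # map prod.swap v)"
proof -
  let ?a = "span_P u" and ?b = "span_Q u"
  let ?w = "u @ (x0, y0) # (1, 0) # (0, 1) # (1, 0) # (x3, y3) # v"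
  let ?w' = "u @ (x0, Suc y0) # (Suc y3, x3) # map prod.swap v"
  have W: "chord ?w x y \<longleftrightarrow> chord u x y \<or> (x = ?a \<and> y = ?b) \<or> (x = ?a + x0 \<and> y = ?b + y0)
     \<or> (x = ?a + Suc x0 \<and> y = ?b + y0)
     \<or> (x = ?a + Suc x0 \<and> y = ?b + Suc y0)
     \<or> (x = ?a + Suc (Suc x0) \<and> y = ?b + Suc y0)
     \<or> (x = ?a + Suc (Suc x0) + x3 \<and> y = ?b + Suc y0 + y3)
     \<or> (?a + Suc (Suc x0) + x3 \<le> x \<and> ?b + Suc y0 + y3 \<le> y
       \<and> chord v (x - (?a + Suc (Suc x0) + x3)) (y - (?b + Suc y0 + y3)))" for x y
    using chord_append3[of u "[(x0, y0), (1, 0), (0, 1), (1, 0), (x3, y3)]" v x y]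
      by (simp add: add.assoc)
  have W': "chord ?w' x y \<longleftrightarrow> chord u x y \<or> (x = ?a \<and> y = ?b) \<or> (x = ?a + x0 \<and> y = ?b + Suc y0)
     \<or> (x = ?a + x0 + Suc y3 \<and> y = ?b + Suc y0 + x3)
     \<or> (?a + x0 + Suc y3 \<le> x \<and> ?b + Suc y0 + x3 \<le> y
       \<and> chord v (y - (?b + Suc y0 + x3)) (x - (?a + x0 + Suc y3)))" for x y
    using chord_append3[of u "[(x0, Suc y0), (Suc y3, x3)]" "map prod.swap v" x y]
      by (simp add: add.assoc chord_map_swap)
  show ?thesis
  proof (rule word_minor_twist[where i = "?a + Suc x0" and j = "?b + y0"])
    show "0 < ?a + Suc x0" by simp
    show "?a + Suc x0 < span_P ?w" by simp
    show "Suc (?b + y0) \<le> span_Q ?w" by simp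
    show "\<forall>y. chord ?w (?a + Suc x0) y \<longleftrightarrow> y = ?b + y0 \<or> y = Suc (?b + y0)"
      unfolding W by (auto dest: chord_le_span)
    show "\<forall>x y. chord ?w x y \<longrightarrow> x < ?a + Suc x0 \<longrightarrow> y \<le> ?b + y0"
      unfolding W by (auto dest: chord_le_span)
    show "\<forall>x y. chord ?w x y \<longrightarrow> ?a + Suc x0 < x \<longrightarrow> Suc (?b + y0) \<le> y"
      unfolding W by (auto dest: chord_le_span)
    show "span_P ?w' = ?a + Suc x0 + span_Q ?w - Suc (?b + y0)" by simp
    show "span_Q ?w' = ?b + y0 + span_P ?w - (?a + Suc x0)" by simp
    fix x y
    show "chord ?w' x y \<longleftrightarrow> (x, y) \<in> twisted_chords (chords ?w) (?a + Suc x0) (?b + y0)"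
    proof (cases "x < ?a + Suc x0")
      case True
      show ?thesis
      proof (cases "y \<le> ?b + y0")
        case True
        then show ?thesis
          using \<open>x < ?a + Suc x0\<close> chord_span[of u] assms unfolding twisted_chords_def chords_def
            mem_Collect_eq prod.case W W'
          by (auto dest: chord_le_span)
      next
        case False
        then show ?thesis
          using \<open>x < ?a + Suc x0\<close> chord_span[of u] assms unfolding twisted_chords_def chords_def
            mem_Collect_eq prod.case W W'
          by (auto dest: chord_le_span)
      qed
    next
      case False
      define a where "a = x - (?a + Suc x0)"
      have xa: "x = ?a + Suc x0 + a" using False by (simp add: a_def)
      show ?thesis
      proof (cases "y \<le> ?b + y0")
        case True
        then show ?thesis
          using xa chord_span[of u] assms unfolding twisted_chords_def chords_def mem_Collect_eq
            prod.case W' by (auto dest: chord_le_span)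
      next
        case False
        define b where "b = y - Suc (?b + y0)"
        have yb: "y = Suc (?b + y0) + b" using False by (simp add: b_def)
        have e1: "y + (?a + Suc x0) - (?b + y0) = ?a + Suc x0 + Suc b" using yb by simp
        have e2: "x + Suc (?b + y0) - (?a + Suc x0) = ?b + y0 + Suc a" using xa by simp
        have L: "chord ?w' x y \<longleftrightarrow> (a = y3 \<and> b = x3) \<or> (y3 \<le> a \<and> x3 \<le> b \<and> chord v (b - x3) (a - y3))"
          unfolding W' xa yb by (auto dest: chord_le_span)
        have R: "chord ?w (?a + Suc x0 + Suc b) (?b + y0 + Suc a)
          \<longleftrightarrow> (a = 0 \<and> b = 0) \<or> (a = y3 \<and> b = x3) \<or> (y3 \<le> a \<and> x3 \<le> b \<and> chord v (b - x3) (a - y3))"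
          unfolding W by (auto dest: chord_le_span)
        show ?thesis
          using False \<open>\<not> x < ?a + Suc x0\<close> assms xa yb unfolding twisted_chords_def chords_def
            mem_Collect_eq prod.case e1 e2 L R by auto
      qed
    qed
  qed
qed


lemma word_minor_twist_split_P:
  assumes "(x0, y0) \<noteq> (0, 0)" "(Suc p2, y2) \<noteq> (1, 0)"
  shows "word_minor (u @ (x0, y0) # (1, 0) # (0, 1) # (Suc p2, y2) # v)
    (u @ (x0, Suc y0) # (1, 0) # (y2, p2) # map prod.swap v)"
proof -
  let ?a = "span_P u" and ?b = "span_Q u"
  let ?w = "u @ (x0, y0) # (1, 0) # (0, 1) # (Suc p2, y2) # v"
  let ?w' = "u @ (x0, Suc y0) # (1, 0) # (y2, p2) # map prod.swap v"
  have W: "chord ?w x y \<longleftrightarrow> chord u x y \<or> (x = ?a \<and> y = ?b) \<or> (x = ?a + x0 \<and> y = ?b + y0)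
     \<or> (x = ?a + Suc x0 \<and> y = ?b + y0)
     \<or> (x = ?a + Suc x0 \<and> y = ?b + Suc y0)
     \<or> (x = ?a + Suc x0 + Suc p2 \<and> y = ?b + Suc y0 + y2)
     \<or> (?a + Suc x0 + Suc p2 \<le> x \<and> ?b + Suc y0 + y2 \<le> y
       \<and> chord v (x - (?a + Suc x0 + Suc p2)) (y - (?b + Suc y0 + y2)))" for x y
    using chord_append3[of u "[(x0, y0), (1, 0), (0, 1), (Suc p2, y2)]" v x y]
      by (simp add: add.assoc)
  have W': "chord ?w' x y \<longleftrightarrow> chord u x y \<or> (x = ?a \<and> y = ?b) \<or> (x = ?a + x0 \<and> y = ?b + Suc y0)
     \<or> (x = ?a + Suc x0 \<and> y = ?b + Suc y0)
     \<or> (x = ?a + Suc x0 + y2 \<and> y = ?b + Suc y0 + p2)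
     \<or> (?a + Suc x0 + y2 \<le> x \<and> ?b + Suc y0 + p2 \<le> y
       \<and> chord v (y - (?b + Suc y0 + p2)) (x - (?a + Suc x0 + y2)))" for x y
    using chord_append3[of u "[(x0, Suc y0), (1, 0), (y2, p2)]" "map prod.swap v" x y]
      by (simp add: add.assoc chord_map_swap)
  show ?thesis
  proof (rule word_minor_twist[where i = "?a + Suc x0" and j = "?b + y0"])
    show "0 < ?a + Suc x0" by simp
    show "?a + Suc x0 < span_P ?w" by simp
    show "Suc (?b + y0) \<le> span_Q ?w" by simp
    show "\<forall>y. chord ?w (?a + Suc x0) y \<longleftrightarrow> y = ?b + y0 \<or> y = Suc (?b + y0)"
      unfolding W by (auto dest: chord_le_span)
    show "\<forall>x y. chord ?w x y \<longrightarrow> x < ?a + Suc x0 \<longrightarrow> y \<le> ?b + y0"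
      unfolding W by (auto dest: chord_le_span)
    show "\<forall>x y. chord ?w x y \<longrightarrow> ?a + Suc x0 < x \<longrightarrow> Suc (?b + y0) \<le> y"
      unfolding W by (auto dest: chord_le_span)
    show "span_P ?w' = ?a + Suc x0 + span_Q ?w - Suc (?b + y0)" by simp
    show "span_Q ?w' = ?b + y0 + span_P ?w - (?a + Suc x0)" by simp
    fix x y
    show "chord ?w' x y \<longleftrightarrow> (x, y) \<in> twisted_chords (chords ?w) (?a + Suc x0) (?b + y0)"
    proof (cases "x < ?a + Suc x0")
      case True
      show ?thesis
      proof (cases "y \<le> ?b + y0")
        case True
        then show ?thesis
          using \<open>x < ?a + Suc x0\<close> chord_span[of u] assms unfolding twisted_chords_def chords_def
            mem_Collect_eq prod.case W W'
          by (auto dest: chord_le_span)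
      next
        case False
        then show ?thesis
          using \<open>x < ?a + Suc x0\<close> chord_span[of u] assms unfolding twisted_chords_def chords_def
            mem_Collect_eq prod.case W W'
          by (auto dest: chord_le_span)
      qed
    next
      case False
      define a where "a = x - (?a + Suc x0)"
      have xa: "x = ?a + Suc x0 + a" using False by (simp add: a_def)
      show ?thesis
      proof (cases "y \<le> ?b + y0")
        case True
        then show ?thesis
          using xa chord_span[of u] assms unfolding twisted_chords_def chords_def mem_Collect_eq
            prod.case W' by (auto dest: chord_le_span)
      next
        case False
        define b where "b = y - Suc (?b + y0)"
        have yb: "y = Suc (?b + y0) + b" using False by (simp add: b_def)
        have e1: "y + (?a + Suc x0) - (?b + y0) = ?a + Suc x0 + Suc b" using yb by simp
        have e2: "x + Suc (?b + y0) - (?a + Suc x0) = ?b + y0 + Suc a" using xa by simp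
        have L: "chord ?w' x y
          \<longleftrightarrow> (a = 0 \<and> b = 0) \<or> (a = y2 \<and> b = p2) \<or> (y2 \<le> a \<and> p2 \<le> b \<and> chord v (b - p2) (a - y2))"
          unfolding W' xa yb by (auto dest: chord_le_span)
        have R: "chord ?w (?a + Suc x0 + Suc b) (?b + y0 + Suc a)
          \<longleftrightarrow> (a = y2 \<and> b = p2) \<or> (y2 \<le> a \<and> p2 \<le> b \<and> chord v (b - p2) (a - y2))"
          unfolding W by (auto dest: chord_le_span)
        show ?thesis
          using False \<open>\<not> x < ?a + Suc x0\<close> assms xa yb unfolding twisted_chords_def chords_def
            mem_Collect_eq prod.case e1 e2 L R by auto
      qed
    qed
  qed
qed


lemma word_minor_merge_Q:
  assumes "(x0, y0) \<noteq> (0, 0)" "(x3, y3) \<noteq> (0, 0)"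
  shows "word_minor (u @ (x0, y0) # (0, 1) # (0, 1) # (x3, y3) # v)
    (u @ (x0 + x3, Suc (y0 + y3)) # v)"
proof -
  have h: "(y0, x0) \<noteq> (0, 0)" "(y3, x3) \<noteq> (0, 0)" using assms by auto
  show ?thesis
    by (rule word_minor_map_swapD)
      (use word_minor_merge_P[OF h, of "map prod.swap u" "map prod.swap v"] in simp)
qed

lemma word_minor_absorb_left_Q:
  assumes "(x0, y0) \<noteq> (0, 0)" "(x2, Suc p2) \<noteq> (0, 1)"
  shows "word_minor (u @ (x0, y0) # (0, 1) # (x2, Suc p2) # v) (u @ (x0, Suc y0) # (x2, p2) # v)"
proof -
  have h: "(y0, x0) \<noteq> (0, 0)" "(Suc p2, x2) \<noteq> (1, 0)" using assms by auto
  show ?thesis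
    by (rule word_minor_map_swapD)
      (use word_minor_absorb_left_P[OF h, of "map prod.swap u" "map prod.swap v"] in simp)
qed

lemma word_minor_absorb_right_Q:
  assumes "(x1, Suc p1) \<noteq> (0, 1)" "(x3, y3) \<noteq> (0, 0)"
  shows "word_minor (u @ (x1, Suc p1) # (0, 1) # (x3, y3) # v) (u @ (x1, p1) # (x3, Suc y3) # v)"
proof -
  have h: "(Suc p1, x1) \<noteq> (1, 0)" "(y3, x3) \<noteq> (0, 0)" using assms by auto
  show ?thesis
    by (rule word_minor_map_swapD)
      (use word_minor_absorb_right_P[OF h, of "map prod.swap u" "map prod.swap v"] in simp)
qed

lemma word_minor_split_Q:
  assumes "(x1, Suc p1) \<noteq> (0, 1)" "(x2, Suc p2) \<noteq> (0, 1)"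
  shows "word_minor (u @ (x1, Suc p1) # (x2, Suc p2) # v) (u @ (x1, p1) # (0, 1) # (x2, p2) # v)"
proof -
  have h: "(Suc p1, x1) \<noteq> (1, 0)" "(Suc p2, x2) \<noteq> (1, 0)" using assms by auto
  show ?thesis
    by (rule word_minor_map_swapD)
      (use word_minor_split_P[OF h, of "map prod.swap u" "map prod.swap v"] in simp)
qed

lemma word_minor_twist_merge_Q:
  assumes "(x0, y0) \<noteq> (0, 0)" "(x3, y3) \<noteq> (0, 0)"
  shows "word_minor (u @ (x0, y0) # (0, 1) # (1, 0) # (0, 1) # (x3, y3) # v)
    (u @ (Suc x0, y0) # (y3, Suc x3) # map prod.swap v)"
proof -
  have h: "(y0, x0) \<noteq> (0, 0)" "(y3, x3) \<noteq> (0, 0)" using assms by auto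
  show ?thesis
    by (rule word_minor_map_swapD)
      (use word_minor_twist_merge_P[OF h, of "map prod.swap u" "map prod.swap v"] in simp)
qed

lemma word_minor_twist_split_Q:
  assumes "(x0, y0) \<noteq> (0, 0)" "(x2, Suc p2) \<noteq> (0, 1)"
  shows "word_minor (u @ (x0, y0) # (0, 1) # (1, 0) # (x2, Suc p2) # v)
    (u @ (Suc x0, y0) # (0, 1) # (p2, x2) # map prod.swap v)"
proof -
  have h: "(y0, x0) \<noteq> (0, 0)" "(Suc p2, x2) \<noteq> (1, 0)" using assms by auto
  show ?thesis
    by (rule word_minor_map_swapD)
      (use word_minor_twist_split_P[OF h, of "map prod.swap u" "map prod.swap v"] in simp)
qed

lemma word_minor_contract_Q: "word_minor (u @ (x1, Suc (Suc p)) # v) (u @ (x1, Suc p) # v)"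
proof (rule word_minor_map_swapD)
  show "word_minor (map prod.swap (u @ (x1, Suc (Suc p)) # v))
    (map prod.swap (u @ (x1, Suc p) # v))"
    using word_minor_contract_P[of "map prod.swap u" p x1 "map prod.swap v"] by simp
qed

lemma cycle_E_iff: "cycle_E L i j \<longleftrightarrow> i < L \<and> j < L \<and>
   (j = Suc i \<or> i = Suc j \<or> (i = 0 \<and> Suc j = L) \<or> (j = 0 \<and> Suc i = L))"
  unfolding cycle_E_def
  by (cases "Suc i = L"; cases "Suc j = L") (auto simp: mod_if)

lemma ladder_face_iso_cycle:
  assumes "3 \<le> a + b + 2"
  shows "graph_iso (ladder_V a b) (ladder_E a b (chords [(a, b)])) (cycle_V (a + b + 2))
    (cycle_E (a + b + 2))"
  unfolding graph_iso_def
proof (intro exI conjI)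
  let ?L = "a + b + 2"
  define f where "f = (\<lambda>v::lvertex. if fst v then a + b + 1 - snd v else snd v)"
  define g where "g = (\<lambda>k::nat. if k \<le> a then (False, k) else (True, a + b + 1 - k))"
  show "bij_betw f (ladder_V a b) (cycle_V ?L)"
    by (rule bij_betw_byWitness[where f'=g])
      (auto simp: f_def g_def ladder_V_def cycle_V_def split: if_splits)
  show "\<forall>x\<in>ladder_V a b. \<forall>y\<in>ladder_V a b. ladder_E a b (chords [(a, b)]) x y
    \<longleftrightarrow> cycle_E ?L (f x) (f y)"
  proof (intro ballI)
    fix x y assume x: "x \<in> ladder_V a b" and y: "y \<in> ladder_V a b"
    obtain bx p where xa: "x = (bx, p)" by fastforce
    obtain by' q where yb: "y = (by', q)" by fastforce
    show "ladder_E a b (chords [(a, b)]) x y \<longleftrightarrow> cycle_E ?L (f x) (f y)"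
      using x y assms unfolding xa yb cycle_E_iff
      by (cases bx; cases by') (auto simp: f_def chords_def)
  qed
qed

lemma word_minor_face:
  assumes "(a, b) \<in> set w"
  shows "word_minor w [(a, b)]"
proof -
  obtain u v where w: "w = u @ (a, b) # v" using assms by (metis split_list)
  let ?a0 = "span_P u" and ?b0 = "span_Q u"
  define U where
    "U = {(False, x) | x. ?a0 \<le> x \<and> x \<le> ?a0 + a} \<union> {(True, y) | y. ?b0 \<le> y \<and> y \<le> ?b0 + b}"
  define f where "f = (\<lambda>v::lvertex. if fst v then (True, snd v - ?b0) else (False, snd v - ?a0))"
  define g where "g = (\<lambda>v::lvertex. if fst v then (True, snd v + ?b0) else (False, snd v + ?a0))"
  have W: "chord w x y \<longleftrightarrow> chord u x y \<or> (x = ?a0 \<and> y = ?b0) \<or> (x = ?a0 + a \<and> y = ?b0 + b)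
     \<or> (?a0 + a \<le> x \<and> ?b0 + b \<le> y \<and> chord v (x - (?a0 + a)) (y - (?b0 + b)))" for x y
    unfolding w using chord_append3[of u "[(a, b)]" v x y] by simp
  have box: "?a0 \<le> x \<Longrightarrow> x \<le> ?a0 + a \<Longrightarrow> ?b0 \<le> y \<Longrightarrow> y \<le> ?b0 + b \<Longrightarrow>
      chord w x y \<longleftrightarrow> (x = ?a0 \<and> y = ?b0) \<or> (x = ?a0 + a \<and> y = ?b0 + b)" for x y
    unfolding W using chord_span[of u] by (auto dest: chord_le_span)
  show ?thesis unfolding word_minor_def
  proof (rule has_vertex_minor_by_induced_subgraph)
    show "U \<subseteq> ladder_V (span_P w) (span_Q w)" by (auto simp: U_def w)
    show "bij_betw f U (ladder_V (span_P [(a, b)]) (span_Q [(a, b)]))"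
      by (rule bij_betw_byWitness[where f'=g]) (auto simp: f_def g_def U_def ladder_V_def)
    fix x y assume x: "x \<in> U" and y: "y \<in> U"
    obtain bx p where xa: "x = (bx, p)" by fastforce
    obtain by' q where yb: "y = (by', q)" by fastforce
    show "ladder_E (span_P w) (span_Q w) (chords w) x y
      \<longleftrightarrow> ladder_E (span_P [(a, b)]) (span_Q [(a, b)]) (chords [(a, b)]) (f x) (f y)"
      using x y box[of p q] box[of q p] unfolding xa yb
      by (cases bx; cases by') (auto simp: U_def f_def w chords_def)
  qed
qed

lemma word_minor_shrink_face_P: "1 \<le> a' \<Longrightarrow> a' \<le> a \<Longrightarrow> word_minor [(a, b)] [(a', b)]"
proof (induction a)
  case 0 then show ?case by simp
next
  case (Suc a)
  show ?case
  proof (cases "a' = Suc a")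
    case True then show ?thesis by (simp add: word_minor_refl)
  next
    case False
    then have "1 \<le> a'" "a' \<le> a" using Suc.prems by auto
    then have h: "word_minor [(a, b)] [(a', b)]" by (rule Suc.IH)
    obtain p where a: "a = Suc p" using \<open>1 \<le> a'\<close> \<open>a' \<le> a\<close> by (cases a) auto
    have "word_minor [(Suc a, b)] [(a, b)]" using word_minor_contract_P[of "[]" p b "[]"] a by simp
    then show ?thesis using h by (rule word_minor_trans)
  qed
qed

lemma word_minor_shrink_face_Q: "1 \<le> b' \<Longrightarrow> b' \<le> b \<Longrightarrow> word_minor [(a, b)] [(a, b')]"
proof (induction b)
  case 0 then show ?case by simp
next
  case (Suc b)
  show ?case
  proof (cases "b' = Suc b")
    case True then show ?thesis by (simp add: word_minor_refl)
  next
    case False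
    then have "1 \<le> b'" "b' \<le> b" using Suc.prems by auto
    then have h: "word_minor [(a, b)] [(a, b')]" by (rule Suc.IH)
    obtain p where b: "b = Suc p" using \<open>1 \<le> b'\<close> \<open>b' \<le> b\<close> by (cases b) auto
    have "word_minor [(a, Suc b)] [(a, b)]" using word_minor_contract_Q[of "[]" a p "[]"] b by simp
    then show ?thesis using h by (rule word_minor_trans)
  qed
qed

definition cycle_minor :: "(nat \<times> nat) list \<Rightarrow> nat \<Rightarrow> bool" where
  "cycle_minor w m \<longleftrightarrow> has_vertex_minor (word_V w) (word_E w) (cycle_V m) (cycle_E m)"

lemma cycle_minor_word_minor: "word_minor w w' \<Longrightarrow> cycle_minor w' m \<Longrightarrow> cycle_minor w m"
  unfolding cycle_minor_def word_minor_def by (rule has_vertex_minor_trans)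

lemma cycle_minor_face: "3 \<le> a + b + 2 \<Longrightarrow> cycle_minor [(a, b)] (a + b + 2)"
  unfolding cycle_minor_def using has_vertex_minor_of_iso[OF ladder_face_iso_cycle[of a b]] by simp

lemma cycle_minor_long_face:
  assumes "(a, b) \<in> set w" "m \<le> a + b + 2" "4 \<le> m"
  shows "cycle_minor w m"
proof -
  have "\<exists>a' b'. word_minor [(a, b)] [(a', b')] \<and> a' + b' + 2 = m"
  proof (cases "m - 3 \<le> a")
    case True
    show ?thesis
    proof (cases "b = 0")
      case True
      then have "word_minor [(a, b)] [(m-2, b)]"
        using word_minor_shrink_face_P[of "m-2" a b] assms \<open>m - 3 \<le> a\<close> by simp
      then show ?thesis using True assms by (intro exI[of _ "m-2"] exI[of _ b]) auto
    next
      case False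
      have 1: "word_minor [(a, b)] [(m-3, b)]"
        using word_minor_shrink_face_P[of "m-3" a b] assms \<open>m - 3 \<le> a\<close> by simp
      have 2: "word_minor [(m-3, b)] [(m-3, 1)]"
        using word_minor_shrink_face_Q[of 1 b "m-3"] False by simp
      show ?thesis using word_minor_trans[OF 1 2] assms by (intro exI[of _ "m-3"] exI[of _ 1]) auto
    qed
  next
    case False
    then have "word_minor [(a, b)] [(a, m - 2 - a)]"
      using word_minor_shrink_face_Q[of "m - 2 - a" b a] assms by simp
    then show ?thesis using False assms by (intro exI[of _ a] exI[of _ "m - 2 - a"]) auto
  qed
  then obtain a' b' where h: "word_minor [(a, b)] [(a', b')]" "a' + b' + 2 = m" by blast
  have "cycle_minor [(a', b')] m" using cycle_minor_face[of a' b'] h(2) assms(3) by simp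
  then have "cycle_minor [(a, b)] m" using h(1) cycle_minor_word_minor by blast
  then show ?thesis using word_minor_face[OF assms(1)] cycle_minor_word_minor by blast
qed

section \<open>The potential argument\<close>

text \<open>A zero letter would repeat a chord; the words of generalized ladders have none.\<close>

definition valid_word :: "(nat \<times> nat) list \<Rightarrow> bool" where
  "valid_word w \<longleftrightarrow> (\<forall>s \<in> set w. s \<noteq> (0, 0))"

definition face_len :: "nat \<times> nat \<Rightarrow> nat" where
  "face_len s = fst s + snd s + 2"

definition has_long_face :: "(nat \<times> nat) list \<Rightarrow> nat \<Rightarrow> bool" where
  "has_long_face w m \<longleftrightarrow> (\<exists>s \<in> set w. m \<le> face_len s)"

definition word_size :: "(nat \<times> nat) list \<Rightarrow> nat" where
  "word_size w = span_P w + span_Q w"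

text \<open>The strategy enlarges the first face of the word, the head.  While the head does not grow,
  the second face is contracted to a triangle (weighted by \<open>tail_unit m\<close>), and next to a
  triangle \<open>triangle_potential\<close> measures how far the following three faces are from
  a configuration in which the head can be enlarged; its branches follow the case distinction
  of \<open>progress_triangle\<close> below.\<close>

definition tail_unit :: "nat \<Rightarrow> nat" where
  "tail_unit m = 2 * m * m + 5 * m + 1"

definition triangle_potential :: "nat \<Rightarrow> nat \<times> nat \<Rightarrow> nat \<times> nat \<Rightarrow> nat \<times> nat \<Rightarrow> nat" where
  "triangle_potential m s2 s3 s4 =
    (if 1 \<le> fst s2 then 0
     else if 1 \<le> fst s3 then snd s2 - 1
     else if s3 = (0, 1) \<and> snd s4 = 0 then m + (snd s2 - 1) + (fst s4 - 1) + 1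
     else 4 * m + 2 * m * (m - (snd s2 + 2)) + (snd s3 - 1))"

fun tail_potential :: "nat \<Rightarrow> (nat \<times> nat) list \<Rightarrow> nat" where
  "tail_potential m (h # s1 # s2 # s3 # s4 # r) = tail_unit m * (face_len s1 - 3) +
     (if s1 = (1, 0) then triangle_potential m s2 s3 s4
      else if s1 = (0, 1) then triangle_potential m (prod.swap s2) (prod.swap s3) (prod.swap s4)
      else 0)"
| "tail_potential m _ = 0"

definition potential :: "nat \<Rightarrow> (nat \<times> nat) list \<Rightarrow> nat" where
  "potential m w = tail_unit m * m * (m - face_len (hd w)) + tail_potential m w"

definition progress :: "nat \<Rightarrow> (nat \<times> nat) list \<Rightarrow> (nat \<times> nat) list \<Rightarrow> bool" where
  "progress m w w' \<longleftrightarrow> w' \<noteq> [] \<and> word_minor w w' \<and> valid_word w' \<and>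
     Suc (word_size w') = word_size w \<and> face_len (hd w) \<le> face_len (hd w') \<and>
     (\<not> has_long_face w' m \<longrightarrow>
        face_len (hd w) < face_len (hd w') \<or> tail_potential m w' < tail_potential m w)"

lemma valid_word_simps [simp]:
  "valid_word []"
  "valid_word (s # w) \<longleftrightarrow> s \<noteq> (0, 0) \<and> valid_word w"
  "valid_word (u @ v) \<longleftrightarrow> valid_word u \<and> valid_word v"
  by (auto simp: valid_word_def)

lemma valid_word_map_swap [simp]: "valid_word (map prod.swap w) \<longleftrightarrow> valid_word w"
  by (auto simp: valid_word_def)

lemma has_long_face_simps [simp]:
  "\<not> has_long_face [] m"
  "has_long_face (s # w) m \<longleftrightarrow> m \<le> face_len s \<or> has_long_face w m"
  "has_long_face (u @ v) m \<longleftrightarrow> has_long_face u m \<or> has_long_face v m"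
  by (auto simp: has_long_face_def)

lemma face_len_swap [simp]: "face_len (prod.swap s) = face_len s"
  by (simp add: face_len_def)

lemma has_long_face_map_swap [simp]: "has_long_face (map prod.swap w) m \<longleftrightarrow> has_long_face w m"
  by (auto simp: has_long_face_def)

lemma word_size_map_swap [simp]: "word_size (map prod.swap w) = word_size w"
  by (simp add: word_size_def)

lemma word_size_le: "\<not> has_long_face w m \<Longrightarrow> word_size w \<le> length w * (m - 3)"
  by (induction w) (auto simp: word_size_def face_len_def)

lemma tail_potential_map_swap: "tail_potential m (map prod.swap w) = tail_potential m w"
proof (cases "(m, w)" rule: tail_potential.cases)
  case (1 m' h s1 s2 s3 s4 r)
  then show ?thesis by (cases s1; cases s2; cases s3; cases s4) (auto simp: face_len_def)
qed auto

lemma triangle_potential_le: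
  assumes "snd s2 \<le> m" "face_len s3 < m" "face_len s4 < m"
  shows "triangle_potential m s2 s3 s4 \<le> 5 * m + 2 * m * (m - (snd s2 + 2))"
  using assms by (auto simp: triangle_potential_def face_len_def)

lemma triangle_potential_less:
  assumes "face_len s2 < m" "face_len s3 < m" "face_len s4 < m"
  shows "triangle_potential m s2 s3 s4 < tail_unit m"
proof -
  have "2 * m * (m - (snd s2 + 2)) \<le> 2 * m * m" by (rule mult_le_mono2) simp
  moreover have "snd s2 \<le> m" using assms(1) by (simp add: face_len_def)
  ultimately show ?thesis
    using triangle_potential_le[of s2 m s3 s4] assms unfolding tail_unit_def by linarith
qed

lemma tail_potential_less_face:
  assumes "\<not> has_long_face w m"
  shows "tail_potential m w < tail_unit m * (face_len (hd (tl w)) - 3) + tail_unit m"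
proof (cases "(m, w)" rule: tail_potential.cases)
  case (1 m' h s1 s2 s3 s4 r)
  then have "face_len s2 < m" "face_len s3 < m" "face_len s4 < m"
    using assms by (auto simp: not_le)
  then have "triangle_potential m s2 s3 s4 < tail_unit m"
    "triangle_potential m (prod.swap s2) (prod.swap s3) (prod.swap s4) < tail_unit m"
    using triangle_potential_less by auto
  then show ?thesis using 1 by (auto simp: tail_unit_def)
qed (auto simp: tail_unit_def)

lemma tail_potential_less:
  assumes "\<not> has_long_face w m" "4 \<le> m"
  shows "tail_potential m w < tail_unit m * m"
proof (cases "(m, w)" rule: tail_potential.cases)
  case (1 m' h s1 s2 s3 s4 r)
  then have "face_len s1 - 3 + 1 \<le> m" using assms by (auto simp: not_le)
  then have "tail_unit m * (face_len s1 - 3) + tail_unit m \<le> tail_unit m * m"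
    using mult_le_mono2[of "face_len s1 - 3 + 1" m "tail_unit m"] by simp
  then show ?thesis using tail_potential_less_face[OF assms(1)] 1 by simp
qed (use assms in \<open>auto simp: tail_unit_def\<close>)

lemma progress_map_swap:
  assumes "progress m (map prod.swap w) w'" "w \<noteq> []"
  shows "progress m w (map prod.swap w')"
proof -
  have ne: "w' \<noteq> []" using assms(1) by (simp add: progress_def)
  have minor: "word_minor w (map prod.swap w')"
    by (rule word_minor_map_swapD) (use assms(1) in \<open>simp add: progress_def\<close>)
  have hd: "hd (map prod.swap w') = prod.swap (hd w')" "hd (map prod.swap w) = prod.swap (hd w)"
    using ne assms(2) by (simp_all add: hd_map)
  have "valid_word w'" "Suc (word_size w') = word_size w" "face_len (hd w) \<le> face_len (hd w')"
    "\<not> has_long_face w' m \<longrightarrow>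
       face_len (hd w) < face_len (hd w') \<or> tail_potential m w' < tail_potential m w"
    using assms(1) unfolding progress_def hd face_len_swap tail_potential_map_swap by auto
  then show ?thesis
    unfolding progress_def hd face_len_swap has_long_face_map_swap tail_potential_map_swap
      word_size_map_swap valid_word_map_swap using ne minor by auto
qed

lemma progressI_head:
  assumes "word_minor w w'" "w' \<noteq> []" "valid_word w'" "Suc (word_size w') = word_size w"
    "face_len (hd w) < face_len (hd w')"
  shows "progress m w w'"
  using assms by (simp add: progress_def)

lemma progressI_tail:
  assumes "word_minor w w'" "w' \<noteq> []" "valid_word w'" "Suc (word_size w') = word_size w"
    "hd w' = hd w" "\<not> has_long_face w' m \<Longrightarrow> tail_potential m w' < tail_potential m w"
  shows "progress m w w'"
  using assms by (simp add: progress_def)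

lemma potential_decreases:
  assumes "progress m w w'" "\<not> has_long_face w m" "\<not> has_long_face w' m" "4 \<le> m"
  shows "potential m w' < potential m w"
proof -
  let ?K = "tail_unit m * m"
  have "w' \<noteq> []" and head: "face_len (hd w) \<le> face_len (hd w')"
    and step: "face_len (hd w) < face_len (hd w') \<or> tail_potential m w' < tail_potential m w"
    using assms(1, 3) by (auto simp: progress_def)
  then have "face_len (hd w') < m" using assms(3) by (auto simp: has_long_face_def not_le)
  from step show ?thesis
  proof
    assume "face_len (hd w) < face_len (hd w')"
    then have "m - face_len (hd w') + 1 \<le> m - face_len (hd w)"
      using \<open>face_len (hd w') < m\<close> by arith
    then have "?K * (m - face_len (hd w')) + ?K \<le> ?K * (m - face_len (hd w))"
      using mult_le_mono2[of _ _ ?K] by (metis add_mult_distrib2 nat_mult_1_right)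
    then show ?thesis
      using tail_potential_less[OF assms(3, 4)] unfolding potential_def by linarith
  next
    assume "tail_potential m w' < tail_potential m w"
    moreover have "?K * (m - face_len (hd w')) \<le> ?K * (m - face_len (hd w))"
      using head by (intro mult_le_mono2) arith
    ultimately show ?thesis unfolding potential_def by linarith
  qed
qed

text \<open>Eight letters after the head leave
  enough letters after every rewriting step below for \<open>tail_potential\<close> to be computed.\<close>

context
  fixes m f1 f2 a2 b2 a3 b3 a4 b4 a5 b5 a6 b6 a7 b7 a8 b8 :: nat
    and r w :: "(nat \<times> nat) list"
  defines w_def: "w \<equiv> (f1, f2) # (1, 0) # (a2, b2) # (a3, b3) # (a4, b4) # (a5, b5) #
    (a6, b6) # (a7, b7) # (a8, b8) # r"
  assumes valid: "valid_word w" and short: "\<not> has_long_face w m" and m4: "4 \<le> m"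
begin

lemma triangle_letters_nonzero:
  "(f1, f2) \<noteq> (0, 0)" "(a2, b2) \<noteq> (0, 0)" "(a3, b3) \<noteq> (0, 0)" "(a4, b4) \<noteq> (0, 0)"
  "(a5, b5) \<noteq> (0, 0)" "(a6, b6) \<noteq> (0, 0)" "(a7, b7) \<noteq> (0, 0)" "(a8, b8) \<noteq> (0, 0)"
  "valid_word r"
  using valid by (auto simp: w_def)

lemma tail_potential_triangle:
  "tail_potential m w = triangle_potential m (a2, b2) (a3, b3) (a4, b4)"
  by (simp add: w_def face_len_def)

lemma progress_triangle_enlarge_head:
  assumes a2: "1 \<le> a2"
  shows "\<exists>w'. progress m w w'"
proof (cases "(a2, b2) = (1, 0)")
  case True
  let ?w' = "(Suc (f1 + a3), f2 + b3) # (a4, b4) # (a5, b5) # (a6, b6) # (a7, b7) # (a8, b8) # r"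
  have "word_minor w ?w'"
    using True triangle_letters_nonzero
      word_minor_merge_P[of f1 f2 a3 b3 "[]" "(a4, b4) # (a5, b5) # (a6, b6) # (a7, b7) # (a8, b8)
        # r"]
    unfolding w_def by simp
  then have "progress m w ?w'"
    using True triangle_letters_nonzero by (intro progressI_head) (auto simp: w_def word_size_def
      face_len_def)
  then show ?thesis ..
next
  case False
  obtain p2 where p2: "a2 = Suc p2" using a2 by (cases a2) auto
  let ?w' = "(Suc f1, f2) # (p2, b2) # (a3, b3) # (a4, b4) # (a5, b5) # (a6, b6) # (a7, b7) # (a8,
    b8) # r"
  have "word_minor w ?w'"
    using False p2 triangle_letters_nonzero word_minor_absorb_left_P[of f1 f2 p2 b2 "[]"
      "(a3, b3) # (a4, b4) # (a5, b5) # (a6, b6) # (a7, b7) # (a8, b8) # r"]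
    unfolding w_def by simp
  then have "progress m w ?w'"
    using False p2 triangle_letters_nonzero
    by (intro progressI_head) (auto simp: w_def word_size_def face_len_def)
  then show ?thesis ..
qed

lemma progress_triangle_twist:
  assumes a2: "a2 = 0" and a3: "1 \<le> a3"
  shows "\<exists>w'. progress m w w'"
proof -
  have b2: "1 \<le> b2" using a2 triangle_letters_nonzero(2) by (cases b2) auto
  obtain p3 where p3: "a3 = Suc p3" using a3 by (cases a3) auto
  consider "2 \<le> b2" | "b2 = 1" "(a3, b3) = (1, 0)" | "b2 = 1" "(a3, b3) \<noteq> (1, 0)"
    using b2 by linarith
  then show ?thesis
  proof cases
    case 1
    then obtain q where q: "b2 = Suc (Suc q)" by (metis add_2_eq_Suc le_Suc_ex)
    let ?w' = "(f1, f2) # (1, 0) # (0, Suc q) # (a3, b3) # (a4, b4) # (a5, b5) # (a6, b6) #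
      (a7, b7) # (a8, b8) # r"
    have "word_minor w ?w'"
      using word_minor_contract_Q[of "[(f1, f2), (1, 0)]" 0 q
        "(a3, b3) # (a4, b4) # (a5, b5) # (a6, b6) # (a7, b7) # (a8, b8) # r"]
      unfolding w_def a2 q by simp
    moreover have "tail_potential m ?w' < tail_potential m w"
      unfolding tail_potential_triangle using p3 q a2 by (simp add: face_len_def
        triangle_potential_def)
    ultimately have "progress m w ?w'"
      using a2 q triangle_letters_nonzero by (intro progressI_tail) (simp_all add: w_def
        word_size_def)
    then show ?thesis ..
  next
    case 2
    let ?w' = "(f1, Suc f2) # (Suc b4, a4) # map prod.swap ((a5, b5) # (a6, b6) # (a7, b7) # (a8,
      b8) # r)"
    have "word_minor w ?w'"
      using 2 triangle_letters_nonzero word_minor_twist_merge_P[of f1 f2 a4 b4 "[]"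
        "(a5, b5) # (a6, b6) # (a7, b7) # (a8, b8) # r"]
      unfolding w_def a2 by simp
    then have "progress m w ?w'"
      using 2 a2 triangle_letters_nonzero
      by (intro progressI_head) (auto simp: w_def word_size_def face_len_def)
    then show ?thesis ..
  next
    case 3
    let ?w' = "(f1, Suc f2) # (1, 0) # (b3, p3) #
      map prod.swap ((a4, b4) # (a5, b5) # (a6, b6) # (a7, b7) # (a8, b8) # r)"
    have "word_minor w ?w'"
      using 3 p3 triangle_letters_nonzero word_minor_twist_split_P[of f1 f2 p3 b3 "[]"
        "(a4, b4) # (a5, b5) # (a6, b6) # (a7, b7) # (a8, b8) # r"]
      unfolding w_def a2 by simp
    then have "progress m w ?w'"
      using 3 a2 p3 triangle_letters_nonzero
      by (intro progressI_head) (auto simp: w_def word_size_def face_len_def)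
    then show ?thesis ..
  qed
qed

lemma progress_triangle_contract_Q:
  assumes a2: "a2 = 0" and a3: "a3 = 0" and b3: "2 \<le> b3"
  shows "\<exists>w'. progress m w w'"
proof -
  obtain q where q: "b3 = Suc (Suc q)" using b3 by (metis add_2_eq_Suc le_Suc_ex)
  let ?w' = "(f1, f2) # (1, 0) # (0, b2) # (0, Suc q) # (a4, b4) # (a5, b5) # (a6, b6) #
    (a7, b7) # (a8, b8) # r"
  have "word_minor w ?w'"
    using word_minor_contract_Q[of "[(f1, f2), (1, 0), (0, b2)]" 0 q
      "(a4, b4) # (a5, b5) # (a6, b6) # (a7, b7) # (a8, b8) # r"]
    unfolding w_def a2 a3 q by simp
  moreover have "b2 \<le> m" "a4 \<le> m" using short by (auto simp: w_def face_len_def)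
  then have "tail_potential m ?w' < tail_potential m w"
    unfolding tail_potential_triangle using a2 a3 q m4
    by (auto simp: face_len_def triangle_potential_def)
  ultimately have "progress m w ?w'"
    using a2 a3 q triangle_letters_nonzero
    by (intro progressI_tail) (simp_all add: w_def word_size_def)
  then show ?thesis ..
qed

lemma progress_triangle_merge_Q:
  assumes a2: "a2 = 0" and a3: "a3 = 0" and b3: "b3 = 1" and b4: "1 \<le> b4"
  shows "\<exists>w'. progress m w w'"
proof -
  obtain p4 where p4: "b4 = Suc p4" using b4 by (cases b4) auto
  have pot: "tail_potential m w = 4 * m + 2 * m * (m - (b2 + 2))"
    unfolding tail_potential_triangle using a2 a3 b3 p4 by (simp add: triangle_potential_def)
  have less: "tail_potential m (h # (1, 0) # (a, b) # s3 # s4 # v) < tail_potential m w"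
    if "\<not> has_long_face (h # (1, 0) # (a, b) # s3 # s4 # v) m" "b2 < b"
    for h a b s3 s4 v
  proof -
    have "b + 2 \<le> m" "face_len s3 < m" "face_len s4 < m"
      using that(1) by (auto simp: face_len_def)
    then have "triangle_potential m (a, b) s3 s4 \<le> 5 * m + 2 * m * (m - (b + 2))"
      using triangle_potential_le[of "(a, b)" m s3 s4] by simp
    moreover have "m - (b + 2) + 1 \<le> m - (b2 + 2)" using that(2) \<open>b + 2 \<le> m\<close> by arith
    then have "2 * m * (m - (b + 2)) + 2 * m \<le> 2 * m * (m - (b2 + 2))"
      using mult_le_mono2[of _ _ "2 * m"] by (metis add_mult_distrib2 nat_mult_1_right)
    ultimately show ?thesis unfolding pot using m4 by (simp add: face_len_def)
  qed
  show ?thesis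
  proof (cases "(a4, b4) = (0, 1)")
    case True
    let ?w' = "(f1, f2) # (1, 0) # (a5, Suc (b2 + b5)) # (a6, b6) # (a7, b7) # (a8, b8) # r"
    have "word_minor w ?w'"
      using True triangle_letters_nonzero word_minor_merge_Q[of 0 b2 a5 b5 "[(f1, f2), (1, 0)]"
        "(a6, b6) # (a7, b7) # (a8, b8) # r"]
      unfolding w_def a2 a3 b3 by simp
    then have "progress m w ?w'"
    proof (rule progressI_tail)
      show "\<not> has_long_face ?w' m \<Longrightarrow> tail_potential m ?w' < tail_potential m w"
        by (rule less) simp_all
    qed (use True a2 a3 b3 triangle_letters_nonzero in \<open>simp_all add: w_def word_size_def\<close>)
    then show ?thesis ..
  next
    case False
    let ?w' = "(f1, f2) # (1, 0) # (0, Suc b2) # (a4, p4) # (a5, b5) # (a6, b6) # (a7, b7) #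
      (a8, b8) # r"
    have "word_minor w ?w'"
      using False p4 a2 triangle_letters_nonzero word_minor_absorb_left_Q[of 0 b2 a4 p4
        "[(f1, f2), (1, 0)]" "(a5, b5) # (a6, b6) # (a7, b7) # (a8, b8) # r"]
      unfolding w_def a3 b3 by simp
    then have "progress m w ?w'"
    proof (rule progressI_tail)
      show "\<not> has_long_face ?w' m \<Longrightarrow> tail_potential m ?w' < tail_potential m w"
        by (rule less) simp_all
    qed (use False p4 a2 a3 b3 triangle_letters_nonzero in \<open>auto simp: w_def word_size_def\<close>)
    then show ?thesis ..
  qed
qed

lemma progress_triangle_fan_contract:
  assumes a2: "a2 = 0" and a3: "a3 = 0" and b3: "b3 = 1" and b4: "b4 = 0"
    and long: "2 \<le> b2 \<or> 2 \<le> a4"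
  shows "\<exists>w'. progress m w w'"
proof -
  have a4: "1 \<le> a4" using b4 triangle_letters_nonzero(4) by (cases a4) auto
  have b2: "1 \<le> b2" using a2 triangle_letters_nonzero(2) by (cases b2) auto
  have pot: "tail_potential m w = m + (b2 - 1) + (a4 - 1) + 1"
    unfolding tail_potential_triangle using a2 a3 b3 b4 by (simp add: triangle_potential_def)
  show ?thesis
  proof (cases "2 \<le> b2")
    case True
    then obtain q where q: "b2 = Suc (Suc q)" by (metis add_2_eq_Suc le_Suc_ex)
    let ?w' = "(f1, f2) # (1, 0) # (0, Suc q) # (0, 1) # (a4, 0) # (a5, b5) # (a6, b6) #
      (a7, b7) # (a8, b8) # r"
    have "word_minor w ?w'"
      using word_minor_contract_Q[of "[(f1, f2), (1, 0)]" 0 q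
        "(0, 1) # (a4, 0) # (a5, b5) # (a6, b6) # (a7, b7) # (a8, b8) # r"]
      unfolding w_def a2 a3 b3 b4 q by simp
    then have "progress m w ?w'"
    proof (rule progressI_tail)
      show "tail_potential m ?w' < tail_potential m w"
        unfolding pot using a2 a3 b3 b4 q a4 by (simp add: face_len_def triangle_potential_def)
    qed (use a2 a3 b3 b4 q a4 triangle_letters_nonzero in \<open>simp_all add: w_def word_size_def\<close>)
    then show ?thesis ..
  next
    case False
    then have b21: "b2 = 1" and "2 \<le> a4" using long b2 by auto
    then obtain q where q: "a4 = Suc (Suc q)" by (metis add_2_eq_Suc le_Suc_ex)
    let ?w' = "(f1, f2) # (1, 0) # (0, 1) # (0, 1) # (Suc q, 0) # (a5, b5) # (a6, b6) #
      (a7, b7) # (a8, b8) # r"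
    have "word_minor w ?w'"
      using word_minor_contract_P[of "[(f1, f2), (1, 0), (0, 1), (0, 1)]" q 0
        "(a5, b5) # (a6, b6) # (a7, b7) # (a8, b8) # r"]
      unfolding w_def a2 a3 b3 b4 b21 q by simp
    then have "progress m w ?w'"
    proof (rule progressI_tail)
      show "tail_potential m ?w' < tail_potential m w"
        unfolding pot using a2 a3 b3 b4 q b21 by (simp add: face_len_def triangle_potential_def)
    qed (use a2 a3 b3 b4 q b21 triangle_letters_nonzero in \<open>simp_all add: w_def word_size_def\<close>)
    then show ?thesis ..
  qed
qed

lemma progress_triangle_fan_P:
  assumes a2: "a2 = 0" and a3: "a3 = 0" and b3: "b3 = 1" and b4: "b4 = 0"
    and b2: "b2 = 1" and a4: "a4 = 1" and a5: "1 \<le> a5"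
  shows "\<exists>w'. progress m w w'"
proof -
  have pot: "tail_potential m w = m + 1"
    unfolding tail_potential_triangle using a2 a3 b3 b4 b2 a4 by (simp add: triangle_potential_def)
  obtain p5 where p5: "a5 = Suc p5" using a5 by (cases a5) auto
  show ?thesis
  proof (cases "(a5, b5) = (1, 0)")
    case True
    let ?w' = "(f1, f2) # (1, 0) # (0, 1) # (Suc a6, Suc b6) # (a7, b7) # (a8, b8) # r"
    have "word_minor w ?w'"
      using True triangle_letters_nonzero word_minor_merge_P[of 0 1 a6 b6 "[(f1, f2), (1, 0), (0,
        1)]"
        "(a7, b7) # (a8, b8) # r"]
      unfolding w_def a2 a3 b3 b4 b2 a4 by simp
    then have "progress m w ?w'"
    proof (rule progressI_tail)
      show "tail_potential m ?w' < tail_potential m w"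
        unfolding pot using True a2 a3 b3 b4 b2 a4 by (simp add: face_len_def
          triangle_potential_def)
    qed (use True a2 a3 b3 b4 b2 a4 triangle_letters_nonzero in \<open>simp_all add: w_def word_size_def\<close>)
    then show ?thesis ..
  next
    case False
    let ?w' = "(f1, f2) # (1, 0) # (0, 1) # (1, 1) # (p5, b5) # (a6, b6) # (a7, b7) # (a8, b8) # r"
    have "word_minor w ?w'"
      using False p5 word_minor_absorb_left_P[of 0 1 p5 b5 "[(f1, f2), (1, 0), (0, 1)]"
        "(a6, b6) # (a7, b7) # (a8, b8) # r"]
      unfolding w_def a2 a3 b3 b4 b2 a4 by simp
    then have "progress m w ?w'"
    proof (rule progressI_tail)
      show "tail_potential m ?w' < tail_potential m w"
        unfolding pot using False p5 a2 a3 b3 b4 b2 a4 by (simp add: face_len_def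
          triangle_potential_def)
    qed (use False p5 a2 a3 b3 b4 b2 a4 triangle_letters_nonzero in \<open>auto simp: w_def
      word_size_def\<close>)
    then show ?thesis ..
  qed
qed

lemma progress_triangle_fan_Q:
  assumes a2: "a2 = 0" and a3: "a3 = 0" and b3: "b3 = 1" and b4: "b4 = 0"
    and b2: "b2 = 1" and a4: "a4 = 1" and a5: "a5 = 0"
  shows "\<exists>w'. progress m w w'"
proof -
  have pot: "tail_potential m w = m + 1"
    unfolding tail_potential_triangle using a2 a3 b3 b4 b2 a4 by (simp add: triangle_potential_def)
  obtain p5 where p5: "b5 = Suc p5" using a5 triangle_letters_nonzero(5) by (cases b5) auto
  show ?thesis
  proof (cases "p5 = 0")
    case True
    let ?w' = "(f1, f2) # (1, 0) # (1, 1) # (b6, Suc a6) # map prod.swap ((a7, b7) # (a8, b8) # r)"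
    have "word_minor w ?w'"
      using True p5 triangle_letters_nonzero word_minor_twist_merge_Q[of 0 1 a6 b6 "[(f1, f2), (1,
        0)]"
        "(a7, b7) # (a8, b8) # r"]
      unfolding w_def a2 a3 b3 b4 b2 a4 a5 by simp
    then have "progress m w ?w'"
    proof (rule progressI_tail)
      show "tail_potential m ?w' < tail_potential m w"
        unfolding pot using True p5 a2 a3 b3 b4 b2 a4 a5 by (simp add: face_len_def
          triangle_potential_def)
    qed (use True p5 a2 a3 b3 b4 b2 a4 a5 triangle_letters_nonzero in \<open>auto simp: w_def
      word_size_def\<close>)
    then show ?thesis ..
  next
    case False
    let ?w' = "(f1, f2) # (1, 0) # (1, 1) # (0, 1) # (p5, 0) #
      map prod.swap ((a6, b6) # (a7, b7) # (a8, b8) # r)"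
    have "word_minor w ?w'"
      using False p5 word_minor_twist_split_Q[of 0 1 0 p5 "[(f1, f2), (1, 0)]"
        "(a6, b6) # (a7, b7) # (a8, b8) # r"]
      unfolding w_def a2 a3 b3 b4 b2 a4 a5 by simp
    then have "progress m w ?w'"
    proof (rule progressI_tail)
      show "tail_potential m ?w' < tail_potential m w"
        unfolding pot using False p5 a2 a3 b3 b4 b2 a4 a5 by (simp add: face_len_def
          triangle_potential_def)
    qed (use False p5 a2 a3 b3 b4 b2 a4 a5 triangle_letters_nonzero in \<open>auto simp: w_def
      word_size_def\<close>)
    then show ?thesis ..
  qed
qed

lemma progress_triangle_fan:
  assumes "a2 = 0" "a3 = 0" "b3 = 1" "b4 = 0"
  shows "\<exists>w'. progress m w w'"
proof -
  have "1 \<le> b2" using assms(1) triangle_letters_nonzero(2) by (cases b2) auto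
  moreover have "1 \<le> a4" using assms(4) triangle_letters_nonzero(4) by (cases a4) auto
  ultimately consider "2 \<le> b2 \<or> 2 \<le> a4" | "b2 = 1" "a4 = 1" "1 \<le> a5" | "b2 = 1" "a4 = 1" "a5 = 0"
    by linarith
  then show ?thesis
  proof cases
    case 1
    then show ?thesis using assms by (rule progress_triangle_fan_contract[rotated 4])
  next
    case 2
    then show ?thesis using assms by (intro progress_triangle_fan_P)
  next
    case 3
    then show ?thesis using assms by (intro progress_triangle_fan_Q)
  qed
qed

lemma progress_triangle: "\<exists>w'. progress m w w'"
proof -
  have "1 \<le> b3" if "a3 = 0" using that triangle_letters_nonzero(3) by (cases b3) auto
  then consider "1 \<le> a2" | "a2 = 0" "1 \<le> a3" | "a2 = 0" "a3 = 0" "2 \<le> b3"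
    | "a2 = 0" "a3 = 0" "b3 = 1" "1 \<le> b4" | "a2 = 0" "a3 = 0" "b3 = 1" "b4 = 0"
    by linarith
  then show ?thesis
  proof cases
    case 1
    then show ?thesis by (rule progress_triangle_enlarge_head)
  next
    case 2
    then show ?thesis by (rule progress_triangle_twist)
  next
    case 3
    then show ?thesis by (rule progress_triangle_contract_Q)
  next
    case 4
    then show ?thesis by (rule progress_triangle_merge_Q)
  next
    case 5
    then show ?thesis by (rule progress_triangle_fan)
  qed
qed

end

lemma progress_square:
  fixes f1 f2 a2 b2 a3 b3 :: nat and s4 :: "nat \<times> nat" and r :: "(nat \<times> nat) list"
  defines "w \<equiv> (f1, f2) # (1, 1) # (a2, b2) # (a3, b3) # s4 # r"
  assumes valid: "valid_word w"
  shows "\<exists>w'. progress m w w'"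
proof -
  have nz: "(f1, f2) \<noteq> (0, 0)" "(a2, b2) \<noteq> (0, 0)" "(a3, b3) \<noteq> (0, 0)" "valid_word (s4 # r)"
    using valid by (auto simp: w_def)
  have triangle: "progress m w ((f1, f2) # t # v)"
    if "word_minor w ((f1, f2) # t # v)" "t = (1, 0) \<or> t = (0, 1)" "valid_word v"
      "Suc (word_size ((f1, f2) # t # v)) = word_size w" for t v
  proof (rule progressI_tail)
    assume "\<not> has_long_face ((f1, f2) # t # v) m"
    from tail_potential_less_face[OF this] show "tail_potential m ((f1, f2) # t # v) <
      tail_potential m w"
      using that(2) by (auto simp: w_def face_len_def)
  qed (use that nz in \<open>auto simp: w_def\<close>)
  consider "(a2, b2) = (1, 0)" | p2 where "a2 = Suc p2" "(a2, b2) \<noteq> (1, 0)"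
    | "(a2, b2) = (0, 1)" | p2 where "a2 = 0" "b2 = Suc p2" "(a2, b2) \<noteq> (0, 1)"
    using nz(2) by (cases a2; cases b2) auto
  then show ?thesis
  proof cases
    case 1
    then show ?thesis
      using nz triangle[of "(0, 1)" "(Suc a3, b3) # s4 # r"]
        word_minor_absorb_right_P[of 0 1 a3 b3 "[(f1, f2)]" "s4 # r"]
      by (auto simp: w_def word_size_def)
  next
    case (2 p2)
    then show ?thesis
      using nz triangle[of "(0, 1)" "(1, 0) # (p2, b2) # (a3, b3) # s4 # r"]
        word_minor_split_P[of 0 1 p2 b2 "[(f1, f2)]" "(a3, b3) # s4 # r"]
      by (auto simp: w_def word_size_def)
  next
    case 3
    then show ?thesis
      using nz triangle[of "(1, 0)" "(a3, Suc b3) # s4 # r"]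
        word_minor_absorb_right_Q[of 1 0 a3 b3 "[(f1, f2)]" "s4 # r"]
      by (auto simp: w_def word_size_def)
  next
    case (4 p2)
    then show ?thesis
      using nz triangle[of "(1, 0)" "(0, 1) # (0, p2) # (a3, b3) # s4 # r"]
        word_minor_split_Q[of 1 0 0 p2 "[(f1, f2)]" "(a3, b3) # s4 # r"]
      by (auto simp: w_def word_size_def)
  qed
qed

lemma progress_contract:
  fixes a1 b1 :: nat and h s2 s3 s4 :: "nat \<times> nat" and r :: "(nat \<times> nat) list"
  defines "w \<equiv> h # (a1, b1) # s2 # s3 # s4 # r"
  assumes valid: "valid_word w" and big: "(a1, b1) \<notin> {(1, 0), (0, 1), (1, 1)}"
  shows "\<exists>w'. progress m w w'"
proof -
  have pot: "tail_potential m w = tail_unit m * (a1 + b1 - 1)"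
    using big by (auto simp: w_def face_len_def)
  have "2 \<le> a1 \<or> 2 \<le> b1" using big valid by (auto simp: w_def)
  then consider q where "a1 = Suc (Suc q)" | q where "b1 = Suc (Suc q)"
    by (metis add_2_eq_Suc le_Suc_ex)
  then show ?thesis
  proof cases
    case (1 q)
    let ?w' = "h # (Suc q, b1) # s2 # s3 # s4 # r"
    have "progress m w ?w'"
    proof (rule progressI_tail)
      show "word_minor w ?w'"
        unfolding w_def 1 using word_minor_contract_P[of "[h]" q b1 "s2 # s3 # s4 # r"] by simp
      show "tail_potential m ?w' < tail_potential m w" if "\<not> has_long_face ?w' m"
        using tail_potential_less_face[OF that] unfolding pot 1
        by (simp add: face_len_def algebra_simps)
    qed (use valid 1 in \<open>simp_all add: w_def word_size_def\<close>)
    then show ?thesis ..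
  next
    case (2 q)
    let ?w' = "h # (a1, Suc q) # s2 # s3 # s4 # r"
    have "progress m w ?w'"
    proof (rule progressI_tail)
      show "word_minor w ?w'"
        unfolding w_def 2 using word_minor_contract_Q[of "[h]" a1 q "s2 # s3 # s4 # r"] by simp
      show "tail_potential m ?w' < tail_potential m w" if "\<not> has_long_face ?w' m"
        using tail_potential_less_face[OF that] unfolding pot 2
        by (simp add: face_len_def algebra_simps)
    qed (use valid 2 in \<open>simp_all add: w_def word_size_def\<close>)
    then show ?thesis ..
  qed
qed

lemma progress_exists:
  assumes valid: "valid_word w" and short: "\<not> has_long_face w m" and m4: "4 \<le> m"
    and len: "9 \<le> length w"
  shows "\<exists>w'. progress m w w'"
proof -
  obtain f1 f2 a1 b1 a2 b2 a3 b3 a4 b4 a5 b5 a6 b6 a7 b7 a8 b8 r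
    where w: "w = (f1, f2) # (a1, b1) # (a2, b2) # (a3, b3) # (a4, b4) # (a5, b5) # (a6, b6) #
      (a7, b7) # (a8, b8) # r"
    using len by (auto simp: numeral_eq_Suc Suc_le_length_iff)
  consider "(a1, b1) = (1, 0)" | "(a1, b1) = (0, 1)" | "(a1, b1) = (1, 1)"
    | "(a1, b1) \<notin> {(1, 0), (0, 1), (1, 1)}" by blast
  then show ?thesis
  proof cases
    case 1
    then show ?thesis
      using progress_triangle[of f1 f2 a2 b2 a3 b3 a4 b4 a5 b5 a6 b6 a7 b7 a8 b8 r] assms
      unfolding w by simp
  next
    case 2
    have "map prod.swap w = (f2, f1) # (1, 0) # (b2, a2) # (b3, a3) # (b4, a4) # (b5, a5) #
        (b6, a6) # (b7, a7) # (b8, a8) # map prod.swap r"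
      using 2 unfolding w by simp
    then obtain w' where "progress m (map prod.swap w) w'"
      using progress_triangle[of f2 f1 b2 a2 b3 a3 b4 a4 b5 a5 b6 a6 b7 a7 b8 a8 "map prod.swap r"]
        valid short m4
      by (metis has_long_face_map_swap valid_word_map_swap)
    then have "progress m w (map prod.swap w')" by (rule progress_map_swap) (simp add: w)
    then show ?thesis ..
  next
    case 3
    then show ?thesis using progress_square[of f1 f2 a2 b2 a3 b3] valid unfolding w by simp
  next
    case 4
    then show ?thesis using progress_contract[of _ a1 b1] valid unfolding w by blast
  qed
qed

text \<open>Each progress step removes one vertex and lowers the potential, so a word whose size
  exceeds its potential by enough ends up, after a sequence of steps, with a long face.\<close>

lemma cycle_minor_of_potential:
  assumes "valid_word w" "4 \<le> m" "has_long_face w m \<or> potential m w + 9 * m \<le> word_size w + 2"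
  shows "cycle_minor w m"
  using assms
proof (induction "word_size w" arbitrary: w rule: less_induct)
  case less
  show ?case
  proof (cases "has_long_face w m")
    case True
    then obtain a b where "(a, b) \<in> set w" "m \<le> a + b + 2"
      by (auto simp: has_long_face_def face_len_def)
    then show ?thesis using cycle_minor_long_face less.prems(2) by blast
  next
    case False
    then have budget: "potential m w + 9 * m \<le> word_size w + 2" using less.prems(3) by simp
    have "9 \<le> length w"
    proof (rule ccontr)
      assume "\<not> 9 \<le> length w"
      then have "length w * (m - 3) \<le> 8 * (m - 3)" by simp
      then show False using word_size_le[OF False] budget \<open>4 \<le> m\<close> by linarith
    qed
    then obtain w' where step: "progress m w w'"
      using progress_exists less.prems(1, 2) False by blast
    then have "Suc (word_size w') = word_size w" "valid_word w'" "word_minor w w'"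
      by (auto simp: progress_def)
    moreover have "has_long_face w' m \<or> potential m w' + 9 * m \<le> word_size w' + 2"
      using potential_decreases[OF step False _ less.prems(2)] budget
        \<open>Suc (word_size w') = word_size w\<close> by linarith
    ultimately show ?thesis
      using less.hyps less.prems(2) cycle_minor_word_minor by (metis lessI)
  qed
qed

section \<open>From generalized ladders to words\<close>

definition ladder_chords :: "'a list \<Rightarrow> 'a list \<Rightarrow> ('a \<Rightarrow> 'a \<Rightarrow> bool) \<Rightarrow> (nat \<times> nat) set" where
  "ladder_chords P Q E = {(i, j). i < length P \<and> j < length Q \<and> E (P ! i) (Q ! j)}"

lemma bij_betw_ladder_V_rails:
  assumes "P \<noteq> []" "Q \<noteq> []" "distinct P" "distinct Q" "set P \<inter> set Q = {}"
  shows "bij_betw (\<lambda>v. if fst v then Q ! snd v else P ! snd v)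
           (ladder_V (length P - 1) (length Q - 1)) (set P \<union> set Q)"
proof (rule bij_betw_imageI)
  have idx: "x \<le> length P - Suc 0 \<longleftrightarrow> x < length P" "x \<le> length Q - Suc 0 \<longleftrightarrow> x < length Q" for x
    using assms(1, 2) by (cases P; cases Q; auto)+
  show "inj_on (\<lambda>v. if fst v
    then Q ! snd v else P ! snd v) (ladder_V (length P - 1) (length Q - 1))"
    using assms by (auto simp: inj_on_def ladder_V_def idx nth_eq_iff_index_eq disjoint_iff)
      (metis nth_mem)+
  show "(\<lambda>v. if fst v then Q ! snd v else P ! snd v) ` ladder_V (length P - 1) (length Q - 1) =
      set P \<union> set Q"
  proof (intro equalityI subsetI)
    fix v assume "v \<in> set P \<union> set Q"
    then obtain i where "i < length P \<and> v = P ! i \<or> i < length Q \<and> v = Q ! i"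
      by (auto simp: in_set_conv_nth)
    then show "v \<in> (\<lambda>v. if fst v then Q ! snd v else P ! snd v) `
        ladder_V (length P - 1) (length Q - 1)"
      by (auto simp: idx intro: image_eqI[of _ _ "(False, i)"] image_eqI[of _ _ "(True, i)"])
  qed (auto simp: ladder_V_def idx)
qed

lemma induced_path_adj:
  assumes "\<forall>i. Suc i < length P \<longrightarrow> E (P ! i) (P ! Suc i)"
    and "\<forall>i<length P. \<forall>i'<length P. E (P ! i) (P ! i') \<longrightarrow> i' = Suc i \<or> i = Suc i'"
    and "\<And>x y. E x y \<Longrightarrow> E y x" "i < length P" "i' < length P"
  shows "E (P ! i) (P ! i') \<longleftrightarrow> i' = Suc i \<or> i = Suc i'"
  using assms by metis

lemma gen_ladder_iso_ladder:
  assumes "gen_ladder_wrt V E P Q"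
  shows "graph_iso (ladder_V (length P - 1) (length Q - 1))
           (ladder_E (length P - 1) (length Q - 1) (ladder_chords P Q E)) V E"
proof -
  have L: "graph V E" "P \<noteq> []" "Q \<noteq> []" "distinct P" "distinct Q" "set P \<inter> set Q = {}"
      "V = set P \<union> set Q"
    and P: "\<forall>i. Suc i < length P \<longrightarrow> E (P ! i) (P ! Suc i)"
      "\<forall>i<length P. \<forall>i'<length P. E (P ! i) (P ! i') \<longrightarrow> i' = Suc i \<or> i = Suc i'"
    and Q: "\<forall>j. Suc j < length Q \<longrightarrow> E (Q ! j) (Q ! Suc j)"
      "\<forall>j<length Q. \<forall>j'<length Q. E (Q ! j) (Q ! j') \<longrightarrow> j' = Suc j \<or> j = Suc j'"
    using assms unfolding gen_ladder_wrt_def by blast+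
  have sym: "E x y \<Longrightarrow> E y x" for x y using L(1) unfolding graph_def by blast
  have idx: "x \<le> length P - Suc 0 \<longleftrightarrow> x < length P" "x \<le> length Q - Suc 0 \<longleftrightarrow> x < length Q" for x
    using L(2, 3) by (cases P; cases Q; auto)+
  let ?f = "\<lambda>v. if fst v then Q ! snd v else P ! snd v"
  have "ladder_E (length P - 1) (length Q - 1) (ladder_chords P Q E) u v \<longleftrightarrow> E (?f u) (?f v)"
    if "u \<in> ladder_V (length P - 1) (length Q - 1)" "v \<in> ladder_V (length P - 1) (length Q - 1)"
    for u v
  proof -
    obtain bu i bv j where uv: "u = (bu, i)" "v = (bv, j)" by fastforce
    show ?thesis
      using that induced_path_adj[OF P sym, of i j] induced_path_adj[OF Q sym, of i j] sym
      unfolding uv by (cases bu; cases bv) (auto simp: idx ladder_chords_def)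
  qed
  then show ?thesis
    unfolding graph_iso_def L(7) using bij_betw_ladder_V_rails[OF L(2-6)] by blast
qed

lemma chain_max:
  fixes C :: "(nat \<times> nat) set"
  assumes "finite C" "C \<noteq> {}"
    and chain: "\<forall>(x, y)\<in>C. \<forall>(x', y')\<in>C. x \<le> x' \<and> y \<le> y' \<or> x' \<le> x \<and> y' \<le> y"
  obtains A B where "(A, B) \<in> C" "\<forall>(x, y)\<in>C. x \<le> A \<and> y \<le> B"
proof -
  let ?f = "\<lambda>d :: nat \<times> nat. fst d + snd d"
  have "Max (?f ` C) \<in> ?f ` C" using assms(1,2) by (intro Max_in) auto
  then obtain A B where AB: "(A, B) \<in> C" "A + B = Max (?f ` C)" by auto
  have "x \<le> A \<and> y \<le> B" if "(x, y) \<in> C" for x y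
  proof -
    have "?f (x, y) \<le> Max (?f ` C)" using that assms(1) by (intro Max_ge imageI) auto
    then show ?thesis using chain that AB by fastforce
  qed
  then show ?thesis using that AB(1) by blast
qed

text \<open>The word is built by appending the step from the largest pair below \<open>(A, B)\<close>.\<close>

lemma chain_word_exists:
  assumes "finite C" "(0, 0) \<in> C" "(A, B) \<in> C" "\<forall>(x, y)\<in>C. x \<le> A \<and> y \<le> B"
    "\<forall>(x, y)\<in>C. \<forall>(x', y')\<in>C. x \<le> x' \<and> y \<le> y' \<or> x' \<le> x \<and> y' \<le> y"
  shows "\<exists>w. valid_word w \<and> span_P w = A \<and> span_Q w = B \<and> (\<forall>x y. chord w x y \<longleftrightarrow> (x, y) \<in> C)"
  using assms
proof (induction "A + B" arbitrary: A B C rule: less_induct)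
  case less
  show ?case
  proof (cases "A + B = 0")
    case True
    then have "C = {(0, 0)}" using less.prems by auto
    then show ?thesis using True by (intro exI[of _ "[]"]) auto
  next
    case False
    define C' where "C' = C - {(A, B)}"
    have C': "finite C'" "(0, 0) \<in> C'"
      "\<forall>(x, y)\<in>C'. \<forall>(x', y')\<in>C'. x \<le> x' \<and> y \<le> y' \<or> x' \<le> x \<and> y' \<le> y"
      using less.prems False by (auto simp: C'_def)
    then obtain A' B' where AB': "(A', B') \<in> C'" and below: "\<forall>(x, y)\<in>C'. x \<le> A' \<and> y \<le> B'"
      using chain_max[OF C'(1) _ C'(3)] by blast
    have le: "A' \<le> A" "B' \<le> B" "(A', B') \<noteq> (A, B)"
      using less.prems(4) AB' by (auto simp: C'_def)
    then have "A' + B' < A + B" by auto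
    then obtain w' where w': "valid_word w'" "span_P w' = A'" "span_Q w' = B'"
        "\<forall>x y. chord w' x y \<longleftrightarrow> (x, y) \<in> C'"
      using less.hyps[OF _ C'(1,2) AB' below C'(3)] by blast
    let ?w = "w' @ [(A - A', B - B')]"
    have "chord ?w x y \<longleftrightarrow> (x, y) \<in> C" for x y
    proof -
      have "chord ?w x y \<longleftrightarrow>
          chord w' x y \<or> (A' \<le> x \<and> B' \<le> y \<and> chord [(A - A', B - B')] (x - A') (y - B'))"
        using chord_append[of w' "[(A - A', B - B')]" x y] w' by simp
      also have "\<dots> \<longleftrightarrow> (x, y) \<in> C' \<or> (x, y) = (A, B)"
        using w'(4) le below AB' by auto
      also have "\<dots> \<longleftrightarrow> (x, y) \<in> C" using less.prems(3) by (auto simp: C'_def)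
      finally show ?thesis .
    qed
    moreover have "valid_word ?w" "span_P ?w = A" "span_Q ?w = B" using w' le by auto
    ultimately show ?thesis by blast
  qed
qed

lemma ladder_chords_chain:
  assumes "gen_ladder_wrt V E P Q" "(x, y) \<in> ladder_chords P Q E" "(x', y') \<in> ladder_chords P Q E"
  shows "x \<le> x' \<and> y \<le> y' \<or> x' \<le> x \<and> y' \<le> y"
proof -
  have nc: "\<forall>i<length P. \<forall>i'<length P. \<forall>j<length Q. \<forall>j'<length Q.
      E (P ! i) (Q ! j) \<and> E (P ! i') (Q ! j') \<and> i < i' \<longrightarrow> \<not> j > j'"
    using assms(1) unfolding gen_ladder_wrt_def by blast
  have "x < length P" "y < length Q" "E (P ! x) (Q ! y)" "x' < length P" "y' < length Q"
    "E (P ! x') (Q ! y')"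
    using assms(2, 3) by (auto simp: ladder_chords_def)
  then show ?thesis
    using nc[rule_format, of x x' y y'] nc[rule_format, of x' x y' y] by linarith
qed

lemma gen_ladder_word:
  assumes "gen_ladder V E"
  obtains w where "valid_word w" "word_size w + 2 = card V"
    "has_vertex_minor V E (word_V w) (word_E w)"
proof -
  obtain P Q where L: "gen_ladder_wrt V E P Q" using assms by (auto simp: gen_ladder_def)
  let ?C = "ladder_chords P Q E"
  have P: "P \<noteq> []" "Q \<noteq> []" "distinct P" "distinct Q" "set P \<inter> set Q = {}"
      "V = set P \<union> set Q" "E (hd P) (hd Q)" "E (last P) (last Q)"
    using L unfolding gen_ladder_wrt_def by blast+
  have fin: "finite ?C"
    by (rule finite_subset[of _ "{..<length P} \<times> {..<length Q}"]) (auto simp: ladder_chords_def)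
  have ends: "(0, 0) \<in> ?C" "(length P - 1, length Q - 1) \<in> ?C"
    using P by (auto simp: ladder_chords_def hd_conv_nth last_conv_nth)
  have bounds: "\<forall>(x, y)\<in>?C. x \<le> length P - 1 \<and> y \<le> length Q - 1"
    by (auto simp: ladder_chords_def)
  have chain: "\<forall>(x, y)\<in>?C. \<forall>(x', y')\<in>?C. x \<le> x' \<and> y \<le> y' \<or> x' \<le> x \<and> y' \<le> y"
    using ladder_chords_chain[OF L] by blast
  obtain w where w: "valid_word w" "span_P w = length P - 1" "span_Q w = length Q - 1"
      "\<forall>x y. chord w x y \<longleftrightarrow> (x, y) \<in> ?C"
    using chain_word_exists[OF fin ends bounds chain] by blast
  then have "chords w = ?C" by (auto simp: chords_def)
  then have "has_vertex_minor V E (word_V w) (word_E w)"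
    using has_vertex_minor_of_iso[OF graph_iso_sym[OF gen_ladder_iso_ladder[OF L]]] w(2, 3) by simp
  moreover have "card V = length P + length Q"
    using P by (simp add: card_Un_disjoint distinct_card)
  then have "word_size w + 2 = card V"
    using P(1, 2) w(2, 3) unfolding word_size_def by (cases P; cases Q) auto
  ultimately show ?thesis using that w(1) by blast
qed

lemma potential_less:
  assumes "\<not> has_long_face w m" "4 \<le> m"
  shows "potential m w < tail_unit m * m * m + tail_unit m * m"
proof -
  have "tail_unit m * m * (m - face_len (hd w)) \<le> tail_unit m * m * m" by (rule mult_le_mono2) simp
  then show ?thesis using tail_potential_less[OF assms] unfolding potential_def by linarith
qed

lemma potential_budget_arith:
  fixes n m :: nat
  assumes "2 \<le> n" "m = 4 * n + 3"
  shows "tail_unit m * m * m + tail_unit m * m + 9 * m \<le> 4608 * n ^ 5"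
proof -
  have "11 \<le> m" using assms by simp
  then have "11 * m \<le> m ^ 2" "11 * m ^ 2 \<le> m ^ 3" "11 * m ^ 3 \<le> m ^ 4"
    by (simp_all add: power_def)
  moreover have "tail_unit m * m * m + tail_unit m * m + 9 * m =
      2 * m ^ 4 + 7 * m ^ 3 + 6 * m ^ 2 + 10 * m"
    unfolding tail_unit_def by (simp add: algebra_simps power_def)
  ultimately have "tail_unit m * m * m + tail_unit m * m + 9 * m \<le> 3 * m ^ 4" by linarith
  moreover have "m ^ 4 \<le> 1296 * n ^ 4"
  proof -
    have "m ^ 4 \<le> (6 * n) ^ 4" using assms by (intro power_mono) simp_all
    then show ?thesis by (simp add: power_mult_distrib)
  qed
  moreover have "2 * n ^ 4 \<le> n ^ 5"
    using mult_le_mono1[OF assms(1), of "n ^ 4"] by (simp add: power_Suc[symmetric])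
  ultimately show ?thesis by linarith
qed

theorem proposition4p1:
  fixes V :: "'a set" and E :: "'a \<Rightarrow> 'a \<Rightarrow> bool" and n :: nat
  assumes "n \<ge> 2"
    and "gen_ladder V E"
    and "card V \<ge> 4608 * n ^ 5"
  shows "has_vertex_minor V E (cycle_V (4 * n + 3)) (cycle_E (4 * n + 3))"
proof -
  let ?m = "4 * n + 3"
  obtain w where w: "valid_word w" "word_size w + 2 = card V"
    and minor: "has_vertex_minor V E (word_V w) (word_E w)"
    using gen_ladder_word[OF assms(2)] .
  have m4: "4 \<le> ?m" using assms(1) by simp
  have "potential ?m w + 9 * ?m \<le> word_size w + 2" if "\<not> has_long_face w ?m"
    using potential_less[OF that m4] potential_budget_arith[OF assms(1) HOL.refl] assms(3) w(2) by
      linarith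
  then have "cycle_minor w ?m" using cycle_minor_of_potential[OF w(1) m4] by blast
  then show ?thesis using minor unfolding cycle_minor_def by (rule has_vertex_minor_trans[rotated])
qed

end
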